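(* Assume the standing assumptions and let $(s,c)$ be the solution of the space-discrete nonlinear system (NS) on $[0,T]\times\Omega_h^+$. Then there is a constant $K>0$, depending only on $\eta,\lambda,C_0,c_m,\varphi_{\min},\varphi_{\max},|B|,T,\|\psi\|_{C^\beta([0,T])},\|s_0\|_{L^2(\Omega_h^+)},\|D^+_hc_0\|_{L^2(\Omega_h^+)}$ (in particular independent of $h$ once these quantities are bounded), such that $$\sup_{t\in[0,T]}\|s(t,\cdot)\|^2_{L^2(\Omega_h^+)}+\int_0^T\|D^+_hs(t,\cdot)\|^2_{L^2(\Omega_h^+)}dt\le K.$$
   Context: Discrete setting: $h>0$, $\Omega_h^+=\{h,2h,\dots\}$, $\Omega_{h,0}^+=\Omega_h^+\cup\{0\}$; $\|f\|_{L^p(\Omega_h^+)}=(h\sum_{z\in\Omega_h^+}|f(z)|^p)^{1/p}$; $D^+_hf(x)=\frac{f(x+h)-f(x)}{h}$, $D^-_hf(x)=\frac{f(x)-f(x-h)}{h}$, $\Delta_h=D^+_hD^-_h$. Standing assumptions: $A=1$, $B\in\{-1,1\}$, $\varphi(c)=A+Bc$, $\lambda>0$, $T>0$, $\eta>0$; $\psi\in C^\beta([0,T])$ for some $\beta\in(1/4,1/2)$, $0\le\psi\le\eta$, $\psi(0)=0$; $0\le s_0\le\eta$, $s_0(0)=0$, $s_0,D^+_hs_0\in L^2(\Omega_h^+)$; $0<c_m\le c_0\le C_0$, $C_0-c_0,D^+_hc_0\in L^2(\Omega_h^+)$; $0<\varphi_{\min}\le\varphi(c)\le\varphi_{\max}$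 for $c\in[0,C_0]$; if $B=1$ then $\eta<1$. System (NS): with $b_c=\frac{B}{2(A+Bc)}$ and $\gamma_c=\lambda c$, $\partial_ts=\Delta_hs+b_c[D^+_hc\,D^+_hs+D^-_hc\,D^-_hs]+\gamma_cBs^2-\gamma_cs$, $\partial_tc=-\lambda\varphi(c)sc$ on $(0,T]\times\Omega_h^+$; $s(0,x)=s_0(x)$, $c(0,x)=c_0(x)$ for $x\in\Omega_h^+$; $s(t,0)=\psi(t)$, $c(t,0)=Ac_0(0)[\varphi(c_0(0))e^{\lambda A\int_0^t\psi(\tau)d\tau}-Bc_0(0)]^{-1}$. *)

theory Defs
  imports "HOL-Analysis.Analysis"
begin

text \<open>Grid functions on \<Omega>_{h,0}^+ = {0,h,2h,...} are represented as
  functions nat \<Rightarrow> real: index k stands for the grid point k*h.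
  \<Omega>_h^+ corresponds to the indices k \<ge> 1.\<close>

definition Dp :: "real \<Rightarrow> (nat \<Rightarrow> real) \<Rightarrow> nat \<Rightarrow> real" where
  "Dp h f k = (f (Suc k) - f k) / h"

definition Dm :: "real \<Rightarrow> (nat \<Rightarrow> real) \<Rightarrow> nat \<Rightarrow> real" where
  "Dm h f k = (f k - f (k - 1)) / h"

definition Lap :: "real \<Rightarrow> (nat \<Rightarrow> real) \<Rightarrow> nat \<Rightarrow> real" where
  "Lap h f k = Dp h (Dm h f) k"

text \<open>Squared L^2(\<Omega>_h^+) norm, h * sum over k \<ge> 1 of |f(kh)|^2, as an extended
  nonnegative real (always well defined).\<close>
definition l2sq :: "real \<Rightarrow> (nat \<Rightarrow> real) \<Rightarrow> ennreal" where
  "l2sq h f = (\<Sum>k. ennreal (h * (f (Suc k))\<^sup>2))"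

definition in_l2 :: "(nat \<Rightarrow> real) \<Rightarrow> bool" where
  "in_l2 f \<longleftrightarrow> summable (\<lambda>k. (f (Suc k))\<^sup>2)"

text \<open>Real-valued squared L^2(\<Omega>_h^+) norm (meaningful when in_l2 f).\<close>
definition l2sq_r :: "real \<Rightarrow> (nat \<Rightarrow> real) \<Rightarrow> real" where
  "l2sq_r h f = h * (\<Sum>k. (f (Suc k))\<^sup>2)"

definition holder_bdd :: "real \<Rightarrow> real \<Rightarrow> (real \<Rightarrow> real) \<Rightarrow> real \<Rightarrow> bool" where
  "holder_bdd \<beta> T \<psi> M \<longleftrightarrow>
     (\<forall>t\<in>{0..T}. \<bar>\<psi> t\<bar> \<le> M) \<and>
     (\<forall>t\<in>{0..T}. \<forall>u\<in>{0..T}. \<bar>\<psi> t - \<psi> u\<bar> \<le> M * \<bar>t - u\<bar> powr \<beta>)"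

text \<open>\<phi>(c) = A + B c with A = 1.\<close>
definition phi :: "real \<Rightarrow> real \<Rightarrow> real" where
  "phi B x = 1 + B * x"

definition NS_solution ::
  "real \<Rightarrow> real \<Rightarrow> real \<Rightarrow> real \<Rightarrow> (real \<Rightarrow> real) \<Rightarrow> (nat \<Rightarrow> real) \<Rightarrow> (nat \<Rightarrow> real)
   \<Rightarrow> (real \<Rightarrow> nat \<Rightarrow> real) \<Rightarrow> (real \<Rightarrow> nat \<Rightarrow> real) \<Rightarrow> bool" where
  "NS_solution h T lam B \<psi> s0 c0 s c \<longleftrightarrow>
     (\<forall>k. continuous_on {0..T} (\<lambda>t. s t k)) \<and>
     (\<forall>k. continuous_on {0..T} (\<lambda>t. c t k)) \<and>
     (\<forall>k\<ge>1. \<forall>t\<in>{0<..T}.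
        ((\<lambda>\<tau>. s \<tau> k) has_real_derivative
           (Lap h (s t) k
            + B / (2 * phi B (c t k)) *
                (Dp h (c t) k * Dp h (s t) k + Dm h (c t) k * Dm h (s t) k)
            + lam * c t k * B * (s t k)\<^sup>2 - lam * c t k * s t k))
          (at t within {0..T})) \<and>
     (\<forall>k\<ge>1. \<forall>t\<in>{0<..T}.
        ((\<lambda>\<tau>. c \<tau> k) has_real_derivative
           (- lam * phi B (c t k) * s t k * c t k)) (at t within {0..T})) \<and>
     (\<forall>k\<ge>1. s 0 k = s0 k \<and> c 0 k = c0 k) \<and>
     (\<forall>t\<in>{0..T}. s t 0 = \<psi> t \<and>
        c t 0 = c0 0 / (phi B (c0 0) * exp (lam * integral {0..t} \<psi>) - B * c0 0)) \<and>
     (\<exists>M. \<forall>t\<in>{0..T}. in_l2 (s t) \<and> l2sq_r h (s t) \<le> M) \<and>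
     (\<exists>M. \<forall>t\<in>{0..T}. \<forall>k. \<bar>c t k\<bar> \<le> M)"

end

theory Submission
  imports Defs
begin

(* The transport term of (NS) merges with the discrete Laplacian, so that
   s_k' = (a_k (s_{k+1} - s_k) + d_k (s_{k-1} - s_k)) / h^2 + R_k with coefficients a_k, d_k >= 1/2
   given by ratios of phi(c).  A discrete maximum principle (Gronwall for the positive parts on
   finite truncations, closed by the l^2 tail of s) keeps s in [0, eta]; then c decreases along
   every grid line, so phi(c) stays in [phi_min, phi_max] and all coefficients are bounded
   independently of h.

   The boundary datum is lifted into the interior by g(t, kh) = (1 - kh)^+ times the mean of psi
   over [t - (kh)^2, t].  For psi Hoelder of order beta > 1/4 both the discrete gradient of g and the
   pairing of w = s - g with dg/dt are bounded uniformly in h.  Summation by parts gives an energy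
   inequality for w on the first n + 1 grid points, coupled to the discrete gradient of c (whose
   equation has no diffusion); Gronwall bounds both up to the flux through the truncation point,
   whose time integral vanishes as n tends to infinity. *)

lemma le_initial_value_if_DERIV_nonpos:
  fixes f f' :: "real \<Rightarrow> real"
  assumes "continuous_on {0..T} f"
    and "\<And>t. 0 < t \<Longrightarrow> t < T \<Longrightarrow> (f has_real_derivative f' t) (at t)"
    and "\<And>t. 0 < t \<Longrightarrow> t < T \<Longrightarrow> f' t \<le> 0"
    and "t \<in> {0..T}"
  shows "f t \<le> f 0"
proof -
  have "continuous_on {0..t} f"
    using assms(1) by (rule continuous_on_subset) (use assms(4) in auto)
  moreover have "\<exists>y. (f has_real_derivative y) (at x) \<and> y \<le> 0" if "0 < x" "x < t" for x
    using assms(2-4) that by fastforce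
  ultimately show ?thesis
    using DERIV_nonpos_imp_decreasing_open[of 0 t f] assms(4) by (cases "t = 0") auto
qed

lemma DERIV_integral_from_0:
  fixes f :: "real \<Rightarrow> real"
  assumes "continuous_on {0..T} f" "0 < t" "t < T"
  shows "((\<lambda>t. integral {0..t} f) has_real_derivative f t) (at t)"
proof -
  have "((\<lambda>t. integral {0..t} f) has_real_derivative f t) (at t within {0..T})"
    by (rule integral_has_real_derivative[OF assms(1)]) (use assms in auto)
  moreover have "t \<in> interior {0..T}" using assms by simp
  ultimately show ?thesis by (metis at_within_interior)
qed

lemma linear_ode_solution:
  fixes u p :: "real \<Rightarrow> real"
  assumes u: "continuous_on {0..T} u" and p: "continuous_on {0..T} p"
    and u': "\<And>t. 0 < t \<Longrightarrow> t < T \<Longrightarrow> (u has_real_derivative p t * u t) (at t)"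
    and t: "t \<in> {0..T}"
  shows "u t = u 0 * exp (integral {0..t} p)"
proof -
  define P where "P = (\<lambda>t. integral {0..t} p)"
  define v where "v = (\<lambda>t. u t * exp (- P t))"
  have "continuous_on {0..T} P"
    unfolding P_def by (intro indefinite_integral_continuous_1 integrable_continuous_real[OF p])
  then have v_cont: "continuous_on {0..T} v"
    unfolding v_def by (intro continuous_intros u)
  have "v t = v 0"
  proof (cases "t = 0")
    case False
    with t have t': "0 < t" "t \<le> T" by auto
    show ?thesis
    proof (rule DERIV_isconst_end[OF t'(1)])
      show "continuous_on {0..t} v" using v_cont by (rule continuous_on_subset) (use t' in auto)
      fix x assume x: "0 < x" "x < t"
      then have "(P has_real_derivative p x) (at x)"
        unfolding P_def using t' by (intro DERIV_integral_from_0[OF p]) auto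
      then have "((\<lambda>x. exp (- P x)) has_real_derivative exp (- P x) * (- p x)) (at x)"
        by (intro DERIV_fun_exp DERIV_minus)
      moreover have "(u has_real_derivative p x * u x) (at x)" using u' x t' by simp
      ultimately have "(v has_real_derivative (p x * u x) * exp (- P x) + (exp (- P x) * (- p x)) * u x) (at x)"
        unfolding v_def by (intro DERIV_mult)
      then show "(v has_real_derivative 0) (at x)" by (simp add: algebra_simps)
    qed
  qed simp
  then have "u t * exp (- P t) * exp (P t) = u 0 * exp (P t)"
    unfolding v_def P_def by simp
  then show ?thesis unfolding P_def by (simp add: mult.assoc flip: exp_add)
qed

lemma integral_ge_neg_bound:
  fixes f :: "real \<Rightarrow> real"
  assumes "continuous_on {0..T} f" "\<And>t. t \<in> {0..T} \<Longrightarrow> \<bar>f t\<bar> \<le> K" "t \<in> {0..T}"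
  shows "- K * T \<le> integral {0..t} f"
proof -
  have K: "0 \<le> K" using assms(2)[of 0] assms(3) by auto
  have "integral {0..t} (\<lambda>_. - K) \<le> integral {0..t} f"
  proof (rule integral_le)
    show "f integrable_on {0..t}"
      by (rule integrable_continuous_real, rule continuous_on_subset[OF assms(1)]) (use assms in auto)
    show "- K \<le> f x" if "x \<in> {0..t}" for x
      using assms(2)[of x] that assms(3) by auto
  qed (rule integrable_const_ivl)
  moreover have "- K * T \<le> - K * t" using assms(3) K by (simp add: mult_left_mono)
  ultimately show ?thesis using assms(3) by (simp add: mult.commute)
qed

lemma holder_imp_continuous:
  fixes f :: "real \<Rightarrow> real"
  assumes "0 < \<beta>" and holder: "\<And>u v. \<bar>f u - f v\<bar> \<le> M * \<bar>u - v\<bar> powr \<beta>"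
  shows "continuous_on UNIV f"
proof (intro continuous_at_imp_continuous_on ballI)
  fix x :: real
  have "((\<lambda>u. \<bar>u - x\<bar>) \<longlongrightarrow> 0) (at x)"
    by (intro tendsto_rabs_zero LIM_zero tendsto_ident_at)
  then have "((\<lambda>u. \<bar>u - x\<bar> powr \<beta>) \<longlongrightarrow> 0) (at x)"
    using assms(1) by (intro tendsto_zero_powrI tendsto_const) auto
  then have "((\<lambda>u. M * \<bar>u - x\<bar> powr \<beta>) \<longlongrightarrow> 0) (at x)"
    by (rule tendsto_mult_right_zero)
  moreover have "\<forall>\<^sub>F u in at x. norm (f u - f x) \<le> M * \<bar>u - x\<bar> powr \<beta>"
    by (intro always_eventually allI) (metis holder real_norm_def)
  ultimately have "((\<lambda>u. f u - f x) \<longlongrightarrow> 0) (at x)"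
    by (rule Lim_null_comparison[rotated])
  then show "isCont f x" by (simp add: isCont_def LIM_zero_iff)
qed

lemma DERIV_max0_square:
  fixes y :: "real \<Rightarrow> real"
  assumes "(y has_real_derivative y') (at x)"
  shows "((\<lambda>t. (max 0 (y t))\<^sup>2) has_real_derivative 2 * max 0 (y x) * y') (at x)"
proof -
  have "((\<lambda>z. (max 0 z)\<^sup>2) has_real_derivative 2 * max 0 z) (at z)" for z :: real
  proof (cases z "0::real" rule: linorder_cases)
    case less
    have "((\<lambda>w. 0) has_real_derivative 2 * max 0 z) (at z)" using less by simp
    then show ?thesis
      by (rule has_field_derivative_transform_within_open[of _ _ _ "{..<0}"]) (use less in auto)
  next
    case greater
    have "((\<lambda>w. w\<^sup>2) has_real_derivative 2 * max 0 z) (at z)"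
      using DERIV_pow[of 2 z] greater by simp
    then show ?thesis
      by (rule has_field_derivative_transform_within_open[of _ _ _ "{0<..}"]) (use greater in auto)
  next
    case equal
    have quotient: "((max 0 w)\<^sup>2 - (max 0 0)\<^sup>2) / (w - 0) = max 0 w" for w :: real
      by (cases "w = 0") (auto simp: max_def power2_eq_square)
    have "((\<lambda>w. max 0 w) \<longlongrightarrow> max 0 0) (at (0::real))"
      by (intro tendsto_intros)
    then have "((\<lambda>w. (max 0 w)\<^sup>2) has_real_derivative 0) (at 0)"
      unfolding has_field_derivative_iff quotient by simp
    then show ?thesis using equal by simp
  qed
  from DERIV_chain2[OF this assms] show ?thesis by (simp add: mult.assoc)
qed

context
  fixes L T :: real and Z Z' D F :: "real \<Rightarrow> real"
  assumes T: "0 \<le> T" and L: "0 \<le> L"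
    and Z_cont: "continuous_on {0..T} Z" and D_cont: "continuous_on {0..T} D"
    and F_cont: "continuous_on {0..T} F"
    and Z_deriv: "\<And>t. 0 < t \<Longrightarrow> t < T \<Longrightarrow> (Z has_real_derivative Z' t) (at t)"
    and energy_ineq: "\<And>t. 0 < t \<Longrightarrow> t < T \<Longrightarrow> Z' t + D t \<le> L * Z t + F t"
    and F_nonneg: "\<And>t. t \<in> {0..T} \<Longrightarrow> 0 \<le> F t"
begin

lemma gronwall_dissipative:
  assumes t: "t \<in> {0..T}"
  shows "exp (- L * t) * Z t + integral {0..t} (\<lambda>\<tau>. exp (- L * \<tau>) * D \<tau>)
    \<le> Z 0 + integral {0..t} F"
proof -
  define eD where "eD \<tau> = exp (- L * \<tau>) * D \<tau>" for \<tau>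
  define \<Phi> where "\<Phi> t = exp (- L * t) * Z t + integral {0..t} eD - integral {0..t} F" for t
  have eD_cont: "continuous_on {0..T} eD" unfolding eD_def by (intro continuous_intros D_cont)
  have "\<Phi> t \<le> \<Phi> 0"
  proof (rule le_initial_value_if_DERIV_nonpos[OF _ _ _ t])
    show "continuous_on {0..T} \<Phi>"
      unfolding \<Phi>_def
      by (intro continuous_intros Z_cont indefinite_integral_continuous_1
          integrable_continuous_real[OF eD_cont] integrable_continuous_real[OF F_cont])
    fix x assume x: "0 < x" "x < T"
    have "((\<lambda>t. exp (- L * t)) has_real_derivative exp (- L * x) * (- L)) (at x)"
      using DERIV_fun_exp[OF DERIV_cmult_Id[of "- L"]] by simp
    from DERIV_diff[OF DERIV_add[OF DERIV_mult[OF this Z_deriv[OF x]]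
          DERIV_integral_from_0[OF eD_cont x]] DERIV_integral_from_0[OF F_cont x]]
    show "(\<Phi> has_real_derivative
        exp (- L * x) * (Z' x + D x - L * Z x) - F x) (at x)"
      unfolding \<Phi>_def eD_def by (simp add: algebra_simps)
    have "exp (- L * x) * (Z' x + D x - L * Z x) \<le> exp (- L * x) * F x"
      using energy_ineq[OF x] by (intro mult_left_mono) auto
    also have "\<dots> \<le> F x"
      using F_nonneg[of x] L x by (intro mult_left_le_one_le) auto
    finally show "exp (- L * x) * (Z' x + D x - L * Z x) - F x \<le> 0" by simp
  qed
  then show ?thesis unfolding \<Phi>_def eD_def by simp
qed

lemma gronwall_sup_bound:
  assumes Z_nonneg: "\<And>t. t \<in> {0..T} \<Longrightarrow> 0 \<le> Z t" and D_nonneg: "\<And>t. t \<in> {0..T} \<Longrightarrow> 0 \<le> D t"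
    and t: "t \<in> {0..T}"
  shows "Z t \<le> exp (L * T) * (Z 0 + integral {0..T} F)"
proof -
  have forcing: "integral {0..t} F \<le> integral {0..T} F"
    using t F_nonneg
    by (intro integral_subset_le integrable_continuous_real continuous_on_subset[OF F_cont]) auto
  have "0 \<le> integral {0..t} (\<lambda>\<tau>. exp (- L * \<tau>) * D \<tau>)"
    by (rule integral_nonneg, rule integrable_continuous_real, rule continuous_on_subset[of "{0..T}"])
      (use t D_nonneg in \<open>auto intro!: continuous_intros D_cont\<close>)
  with gronwall_dissipative[OF t] forcing
  have bound: "exp (- L * t) * Z t \<le> Z 0 + integral {0..T} F" by linarith
  have "Z t = exp (L * t) * (exp (- L * t) * Z t)" by (simp add: exp_minus field_simps)
  also have "\<dots> \<le> exp (L * t) * (Z 0 + integral {0..T} F)"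
    using bound by (intro mult_left_mono) auto
  also have "\<dots> \<le> exp (L * T) * (Z 0 + integral {0..T} F)"
  proof (rule mult_right_mono)
    show "exp (L * t) \<le> exp (L * T)" using t L by (simp add: mult_left_mono)
    show "0 \<le> Z 0 + integral {0..T} F"
      using bound Z_nonneg[OF t] by (smt (verit) exp_gt_zero mult_nonneg_nonneg)
  qed
  finally show ?thesis .
qed

lemma gronwall_dissipation_bound:
  assumes Z_nonneg: "\<And>t. t \<in> {0..T} \<Longrightarrow> 0 \<le> Z t" and D_nonneg: "\<And>t. t \<in> {0..T} \<Longrightarrow> 0 \<le> D t"
  shows "integral {0..T} D \<le> exp (L * T) * (Z 0 + integral {0..T} F)"
proof -
  have T': "T \<in> {0..T}" using T by simp
  have "integral {0..T} (\<lambda>\<tau>. exp (- L * T) * D \<tau>) \<le> integral {0..T} (\<lambda>\<tau>. exp (- L * \<tau>) * D \<tau>)"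
  proof (rule integral_le)
    show "(\<lambda>\<tau>. exp (- L * T) * D \<tau>) integrable_on {0..T}"
      by (intro integrable_continuous_real continuous_intros D_cont)
    show "(\<lambda>\<tau>. exp (- L * \<tau>) * D \<tau>) integrable_on {0..T}"
      by (intro integrable_continuous_real continuous_intros D_cont)
    fix x assume "x \<in> {0..T}"
    then show "exp (- L * T) * D x \<le> exp (- L * x) * D x"
      using L D_nonneg[of x] by (intro mult_right_mono) (auto simp: mult_left_mono)
  qed
  also have "\<dots> \<le> Z 0 + integral {0..T} F"
    using gronwall_dissipative[OF T'] Z_nonneg[OF T'] by (smt (verit) exp_gt_zero mult_nonneg_nonneg)
  finally have "exp (- L * T) * integral {0..T} D \<le> Z 0 + integral {0..T} F" by simp
  then show ?thesis by (simp add: exp_minus field_simps)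
qed

end

lemma square_add_le: "(a + b)\<^sup>2 \<le> 2 * a\<^sup>2 + 2 * (b::real)\<^sup>2"
  using sum_squares_bound[of a b] by (simp add: power2_eq_square algebra_simps)

lemma mult_le_weighted_squares:
  fixes p q \<theta> :: real
  assumes "0 < \<theta>"
  shows "p * q \<le> \<theta> * p\<^sup>2 + q\<^sup>2 / (4 * \<theta>)"
proof -
  have "\<theta> * p\<^sup>2 + q\<^sup>2 / (4 * \<theta>) - p * q = (2 * \<theta> * p - q)\<^sup>2 / (4 * \<theta>)"
    using assms by (simp add: field_simps power2_eq_square)
  moreover have "0 \<le> (2 * \<theta> * p - q)\<^sup>2 / (4 * \<theta>)" using assms by simp
  ultimately show ?thesis by linarith
qed

lemma square_powr: "0 < x \<Longrightarrow> (x\<^sup>2) powr a = x powr (2 * a)" for x a :: real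
  by (simp add: powr_powr flip: powr_numeral)

lemma sum_shift_Suc:
  fixes f :: "nat \<Rightarrow> real"
  shows "(\<Sum>k=1..N. f (Suc k)) = (\<Sum>k=1..N. f k) - f 1 + f (Suc N)"
  by (induction N) (auto simp: sum.cl_ivl_Suc)

lemma sum_shift_pred:
  fixes f :: "nat \<Rightarrow> real"
  shows "(\<Sum>k=1..Suc N. f (k - 1)) = f 0 + (\<Sum>k=1..N. f k)"
  by (induction N) (auto simp: sum.cl_ivl_Suc)

lemma summation_by_parts:
  fixes w s a d :: "nat \<Rightarrow> real"
  shows "(\<Sum>k=1..Suc n. w k * (a k * (s (Suc k) - s k) - d k * (s k - s (k - 1)))) =
    - (\<Sum>k=1..n. a k * (w (Suc k) - w k) * (s (Suc k) - s k))
    - (\<Sum>k=1..n. (d (Suc k) - a k) * w (Suc k) * (s (Suc k) - s k))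
    + a (Suc n) * w (Suc n) * (s (Suc (Suc n)) - s (Suc n)) - d 1 * w 1 * (s 1 - s 0)"
  by (induction n) (simp_all add: sum.cl_ivl_Suc algebra_simps)

lemma square_le_mult_sum_square_diffs:
  fixes w :: "nat \<Rightarrow> real"
  assumes "w 0 = 0" "k \<le> Suc n"
  shows "(w k)\<^sup>2 \<le> real k * ((w 1)\<^sup>2 + (\<Sum>j=1..n. (w (Suc j) - w j)\<^sup>2))"
proof -
  have "w k = (\<Sum>j<k. w (Suc j) - w j)"
    using assms(1) by (induction k) auto
  then have "(w k)\<^sup>2 \<le> real k * (\<Sum>j<k. (w (Suc j) - w j)\<^sup>2)"
    using sum_squared_le_sum_of_squares[of "\<lambda>j. w (Suc j) - w j" "{..<k}"] by (simp add: mult.commute)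
  also have "(\<Sum>j<k. (w (Suc j) - w j)\<^sup>2) \<le> (\<Sum>j\<le>n. (w (Suc j) - w j)\<^sup>2)"
    using assms(2) by (intro sum_mono2) auto
  also have "(\<Sum>j\<le>n. (w (Suc j) - w j)\<^sup>2) = (w 1)\<^sup>2 + (\<Sum>j=1..n. (w (Suc j) - w j)\<^sup>2)"
    using assms(1) by (simp add: atLeast0AtMost[symmetric] sum.atLeast_Suc_atMost)
  finally show ?thesis by (simp add: mult_left_mono)
qed

lemma powr_diff_lower_bound:
  fixes a b g :: real
  assumes "0 \<le> g" "g < 1" "0 \<le> a" "a \<le> b" "0 < b"
  shows "(1 - g) * (b - a) * b powr (- g) \<le> b powr (1 - g) - a powr (1 - g)"
proof (cases "a = 0")
  case True
  have "(1 - g) * b * b powr (- g) = (1 - g) * b powr (1 - g)"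
    using assms by (simp add: powr_diff powr_minus divide_simps)
  also have "\<dots> \<le> b powr (1 - g)" using assms by (simp add: mult_le_cancel_right1)
  finally show ?thesis using True by simp
next
  case False
  with assms have a: "0 < a" by simp
  show ?thesis
  proof (cases "a = b")
    case False
    with assms have ab: "a < b" by simp
    have "((\<lambda>x. x powr (1 - g)) has_real_derivative (1 - g) * x powr (1 - g - 1)) (at x)"
      if "a \<le> x" "x \<le> b" for x
      using a that by (intro has_real_derivative_powr) auto
    from MVT2[OF ab this] obtain z where
      z: "a < z" "z < b" "b powr (1 - g) - a powr (1 - g) = (b - a) * ((1 - g) * z powr (- g))"
      by auto
    have "b powr (- g) \<le> z powr (- g)"
      using z a assms by (intro powr_mono2') auto
    then have "(1 - g) * (b - a) * b powr (- g) \<le> (1 - g) * (b - a) * z powr (- g)"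
      using assms ab by (intro mult_left_mono) auto
    then show ?thesis using z(3) by (simp add: algebra_simps)
  qed simp
qed

text \<open>A Riemann sum of \<open>x powr (- g)\<close> over \<open>[0, 1]\<close>: since the integrand is decreasing, the
  sum is dominated by the integral despite the singularity at 0.\<close>

lemma riemann_sum_powr_le_min:
  fixes g h :: real
  assumes g: "0 \<le> g" "g < 1" and h: "0 < h"
  shows "h * (\<Sum>k=1..N. (if real k * h \<le> 1 then (real k * h) powr (- g) else 0))
          \<le> (min (real N * h) 1) powr (1 - g) / (1 - g)"
proof (induction N)
  case (Suc N)
  have step: "real N * h \<le> real (Suc N) * h" using h by (intro mult_right_mono) auto
  show ?case
  proof (cases "real (Suc N) * h \<le> 1")
    case True
    have "(1 - g) * (real (Suc N) * h - real N * h) * (real (Suc N) * h) powr (- g)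
        \<le> (real (Suc N) * h) powr (1 - g) - (real N * h) powr (1 - g)"
      using g h by (intro powr_diff_lower_bound) auto
    then have incr: "h * (real (Suc N) * h) powr (- g)
        \<le> ((real (Suc N) * h) powr (1 - g) - (real N * h) powr (1 - g)) / (1 - g)"
      using g by (simp add: algebra_simps pos_le_divide_eq)
    have "h * (\<Sum>k=1..Suc N. (if real k * h \<le> 1 then (real k * h) powr (- g) else 0))
       = h * (\<Sum>k=1..N. (if real k * h \<le> 1 then (real k * h) powr (- g) else 0)) + h * (real (Suc N) * h) powr (- g)"
      using True by (simp add: sum.cl_ivl_Suc algebra_simps)
    also have "\<dots> \<le> (real N * h) powr (1 - g) / (1 - g) + h * (real (Suc N) * h) powr (- g)"
      using Suc.IH step True by simp
    also have "\<dots> \<le> (real (Suc N) * h) powr (1 - g) / (1 - g)"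
      using incr by (simp add: diff_divide_distrib)
    finally show ?thesis using True by simp
  next
    case False
    then have "h * (\<Sum>k=1..Suc N. (if real k * h \<le> 1 then (real k * h) powr (- g) else 0))
       = h * (\<Sum>k=1..N. (if real k * h \<le> 1 then (real k * h) powr (- g) else 0))"
      by (simp add: sum.cl_ivl_Suc)
    also have "\<dots> \<le> (min (real N * h) 1) powr (1 - g) / (1 - g)" by (rule Suc.IH)
    also have "\<dots> \<le> (min (real (Suc N) * h) 1) powr (1 - g) / (1 - g)"
      using min.mono[OF step order_refl] g h by (intro divide_right_mono powr_mono2) auto
    finally show ?thesis .
  qed
qed simp

lemma riemann_sum_powr_le:
  fixes g h :: real
  assumes "0 \<le> g" "g < 1" "0 < h"
  shows "h * (\<Sum>k=1..N. (if real k * h \<le> 1 then (real k * h) powr (- g) else 0)) \<le> 1 / (1 - g)"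
proof -
  have "(min (real N * h) 1) powr (1 - g) \<le> 1"
    using assms by (intro powr_le1) auto
  with riemann_sum_powr_le_min[OF assms, of N] assms show ?thesis
    by (smt (verit) divide_right_mono)
qed

lemma le_l2sq_r_if_in_l2:
  fixes f :: "nat \<Rightarrow> real"
  assumes "in_l2 f" "0 < h"
  shows "h * (\<Sum>k=1..N. (f k)\<^sup>2) \<le> l2sq_r h f"
proof -
  have "(\<Sum>k=1..N. (f k)\<^sup>2) = (\<Sum>j<N. (f (Suc j))\<^sup>2)"
    by (induction N) (auto simp: sum.cl_ivl_Suc)
  also have "\<dots> \<le> (\<Sum>j. (f (Suc j))\<^sup>2)"
    using assms(1) unfolding in_l2_def by (intro sum_le_suminf) auto
  finally show ?thesis unfolding l2sq_r_def using assms(2) by (intro mult_left_mono) auto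
qed

lemma suminf_ennreal_le:
  fixes f :: "nat \<Rightarrow> real"
  assumes "\<And>n. (\<Sum>i<n. f i) \<le> K" "\<And>i. 0 \<le> f i"
  shows "(\<Sum>i. ennreal (f i)) \<le> ennreal K"
  unfolding suminf_eq_SUP
proof (rule SUP_least)
  fix n
  have "(\<Sum>i<n. ennreal (f i)) = ennreal (\<Sum>i<n. f i)" using assms(2) by simp
  also have "\<dots> \<le> ennreal K" using assms(1) by (rule ennreal_leI)
  finally show "(\<Sum>i<n. ennreal (f i)) \<le> ennreal K" .
qed

lemma nn_integral_suminf_continuous:
  fixes F :: "nat \<Rightarrow> real \<Rightarrow> real"
  assumes cont: "\<And>i. continuous_on {a..b} (F i)" and nonneg: "\<And>i t. 0 \<le> F i t"
  shows "(\<integral>\<^sup>+ t\<in>{a..b}. (\<Sum>i. ennreal (F i t)) \<partial>lborel) = (\<Sum>i. ennreal (integral {a..b} (F i)))"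
proof -
  have meas: "(\<lambda>t. ennreal (F i t) * indicator {a..b} t) \<in> borel_measurable lborel" for i
  proof -
    have "(\<lambda>t. indicator {a..b} t *\<^sub>R F i t) \<in> borel_measurable borel"
      by (rule borel_measurable_continuous_on_indicator[OF _ cont]) simp
    from measurable_compose[OF this measurable_ennreal]
    have "(\<lambda>t. ennreal (indicator {a..b} t *\<^sub>R F i t)) \<in> borel_measurable borel" .
    moreover have "(\<lambda>t. ennreal (indicator {a..b} t *\<^sub>R F i t)) = (\<lambda>t. ennreal (F i t) * indicator {a..b} t)"
      by (auto simp: indicator_def fun_eq_iff)
    ultimately show ?thesis by simp
  qed
  have "(\<integral>\<^sup>+ t\<in>{a..b}. (\<Sum>i. ennreal (F i t)) \<partial>lborel)
      = (\<integral>\<^sup>+ t. (\<Sum>i. ennreal (F i t) * indicator {a..b} t) \<partial>lborel)"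
    by simp
  also have "\<dots> = (\<Sum>i. \<integral>\<^sup>+ t. ennreal (F i t) * indicator {a..b} t \<partial>lborel)"
    by (rule nn_integral_suminf[OF meas])
  also have "\<dots> = (\<Sum>i. ennreal (integral {a..b} (F i)))"
    using nonneg cont
    by (intro suminf_cong nn_integral_has_integral_lebesgue' integrable_integral integrable_continuous_real)
  finally show ?thesis .
qed

lemma le_if_le_plus_null_sequence:
  fixes X a b :: real and e :: "nat \<Rightarrow> real"
  assumes "e \<longlonglongrightarrow> 0" "\<And>n. N \<le> n \<Longrightarrow> X \<le> a + b * e n"
  shows "X \<le> a"
proof -
  have "(\<lambda>n. a + b * e n) \<longlonglongrightarrow> a + b * 0" by (intro tendsto_intros assms(1))
  then show ?thesis by (intro LIMSEQ_le_const) (use assms(2) in auto)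
qed

section \<open>A discrete maximum principle\<close>

lemma max_principle_summand_le:
  fixes y y_next y_prev a d r h A L :: real
  assumes "0 \<le> a" "a \<le> A" "0 \<le> d" "d \<le> A" and reaction: "0 < y \<Longrightarrow> r \<le> L * y"
  shows "2 * max 0 y * ((a * (y_next - y) + d * (y_prev - y)) / h\<^sup>2 + r)
    \<le> A / h\<^sup>2 * (2 * (max 0 y)\<^sup>2 + (max 0 y_next)\<^sup>2 + (max 0 y_prev)\<^sup>2) + 2 * L * (max 0 y)\<^sup>2"
proof (cases "0 < y")
  case True
  have "y_next - y \<le> max 0 y_next" "y_prev - y \<le> max 0 y_prev" "0 \<le> max 0 y_next" "0 \<le> max 0 y_prev"
    using True by auto
  then have "a * (y_next - y) \<le> A * max 0 y_next" "d * (y_prev - y) \<le> A * max 0 y_prev"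
    using assms(1-4) by (meson mult_left_mono mult_right_mono order_trans)+
  then have "2 * (y * (a * (y_next - y) + d * (y_prev - y))) \<le> 2 * (y * (A * max 0 y_next + A * max 0 y_prev))"
    using True by (intro mult_left_mono add_mono) auto
  also have "\<dots> = A * (2 * (y * max 0 y_next) + 2 * (y * max 0 y_prev))" by (simp add: algebra_simps)
  also have "\<dots> \<le> A * (2 * y\<^sup>2 + (max 0 y_next)\<^sup>2 + (max 0 y_prev)\<^sup>2)"
  proof -
    have "2 * (y * z) \<le> y\<^sup>2 + z\<^sup>2" for z
      using sum_squares_bound[of y z] by (simp add: power2_eq_square)
    from this[of "max 0 y_next"] this[of "max 0 y_prev"] assms(1,2) show ?thesis
      by (intro mult_left_mono) auto
  qed
  finally have diffusion: "2 * (y * (a * (y_next - y) + d * (y_prev - y))) / h\<^sup>2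
      \<le> A / h\<^sup>2 * (2 * y\<^sup>2 + (max 0 y_next)\<^sup>2 + (max 0 y_prev)\<^sup>2)"
    using divide_right_mono[of _ _ "h\<^sup>2"] by fastforce
  have "y * r \<le> L * y\<^sup>2"
    using mult_left_mono[OF reaction[OF True], of y] True by (simp add: power2_eq_square)
  moreover have "2 * max 0 y * ((a * (y_next - y) + d * (y_prev - y)) / h\<^sup>2 + r)
      = 2 * (y * (a * (y_next - y) + d * (y_prev - y))) / h\<^sup>2 + 2 * (y * r)"
    using True by (simp add: algebra_simps add_divide_distrib)
  ultimately show ?thesis using diffusion True by simp
qed (use assms in simp)

lemma max_principle_slice:
  fixes y a d r :: "nat \<Rightarrow> real" and h A L :: real
  assumes h: "0 < h" and A: "0 \<le> A" and L: "0 \<le> L" and y0: "y 0 \<le> 0"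
    and coef: "\<And>k. 1 \<le> k \<Longrightarrow> 0 \<le> a k \<and> a k \<le> A \<and> 0 \<le> d k \<and> d k \<le> A"
    and reaction: "\<And>k. 1 \<le> k \<Longrightarrow> 0 < y k \<Longrightarrow> r k \<le> L * y k"
  shows "(\<Sum>k=1..N. 2 * max 0 (y k) * ((a k * (y (Suc k) - y k) + d k * (y (k - 1) - y k)) / h\<^sup>2 + r k))
    \<le> (4 * A / h\<^sup>2 + 2 * L) * (\<Sum>k=1..N. (max 0 (y k))\<^sup>2) + A / h\<^sup>2 * (max 0 (y (Suc N)))\<^sup>2"
proof -
  define p where "p k = max 0 (y k)" for k
  have shift_up: "(\<Sum>k=1..N. (p (Suc k))\<^sup>2) \<le> (\<Sum>k=1..N. (p k)\<^sup>2) + (p (Suc N))\<^sup>2"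
    using sum_shift_Suc[of "\<lambda>k. (p k)\<^sup>2" N] by simp
  have shift_down: "(\<Sum>k=1..N. (p (k - 1))\<^sup>2) \<le> (\<Sum>k=1..N. (p k)\<^sup>2)"
  proof (cases N)
    case (Suc M)
    have "(\<Sum>k=1..M. (p k)\<^sup>2) \<le> (\<Sum>k=1..Suc M. (p k)\<^sup>2)" by (simp add: sum.cl_ivl_Suc)
    moreover have "p 0 = 0" unfolding p_def using y0 by simp
    ultimately show ?thesis using Suc sum_shift_pred[of "\<lambda>k. (p k)\<^sup>2" M] by simp
  qed simp
  have "(\<Sum>k=1..N. 2 * p k * ((a k * (y (Suc k) - y k) + d k * (y (k - 1) - y k)) / h\<^sup>2 + r k))
      \<le> (\<Sum>k=1..N. A / h\<^sup>2 * (2 * (p k)\<^sup>2 + (p (Suc k))\<^sup>2 + (p (k - 1))\<^sup>2) + 2 * L * (p k)\<^sup>2)"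
    unfolding p_def using coef reaction by (intro sum_mono max_principle_summand_le) auto
  also have "\<dots> = A / h\<^sup>2 * (2 * (\<Sum>k=1..N. (p k)\<^sup>2) + (\<Sum>k=1..N. (p (Suc k))\<^sup>2)
      + (\<Sum>k=1..N. (p (k - 1))\<^sup>2)) + 2 * L * (\<Sum>k=1..N. (p k)\<^sup>2)"
    by (simp only: sum.distrib sum_distrib_left distrib_left)
  also have "\<dots> \<le> A / h\<^sup>2 * (4 * (\<Sum>k=1..N. (p k)\<^sup>2) + (p (Suc N))\<^sup>2) + 2 * L * (\<Sum>k=1..N. (p k)\<^sup>2)"
    using shift_up shift_down A h by (intro add_right_mono mult_left_mono) auto
  finally show ?thesis unfolding p_def by (simp add: algebra_simps)
qed

text \<open>Positive parts are controlled on the truncation \<open>{1..N}\<close> by Gronwall, up to the flux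
  through the grid point \<open>N + 1\<close>; the decay of that flux (an \<open>\<ell>\<^sup>2\<close> tail) closes the argument.\<close>

lemma max_principle_truncated:
  fixes y a d r :: "real \<Rightarrow> nat \<Rightarrow> real" and h T A L :: real
  assumes h: "0 < h" and A: "0 \<le> A" and L: "0 \<le> L"
    and cont: "\<And>k. continuous_on {0..T} (\<lambda>t. y t k)"
    and deriv: "\<And>k t. 1 \<le> k \<Longrightarrow> 0 < t \<Longrightarrow> t < T \<Longrightarrow> ((\<lambda>\<tau>. y \<tau> k) has_real_derivative
        (a t k * (y t (Suc k) - y t k) + d t k * (y t (k - 1) - y t k)) / h\<^sup>2 + r t k) (at t)"
    and coef: "\<And>k t. 1 \<le> k \<Longrightarrow> 0 < t \<Longrightarrow> t < T \<Longrightarrow> 0 \<le> a t k \<and> a t k \<le> A \<and> 0 \<le> d t k \<and> d t k \<le> A"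
    and reaction: "\<And>k t. 1 \<le> k \<Longrightarrow> 0 < t \<Longrightarrow> t < T \<Longrightarrow> 0 < y t k \<Longrightarrow> r t k \<le> L * y t k"
    and boundary: "\<And>t. t \<in> {0..T} \<Longrightarrow> y t 0 \<le> 0"
    and initial: "\<And>k. 1 \<le> k \<Longrightarrow> y 0 k \<le> 0"
    and t: "t \<in> {0..T}"
  shows "(\<Sum>k=1..N. (max 0 (y t k))\<^sup>2)
    \<le> exp ((4 * A / h\<^sup>2 + 2 * L) * T) * (A / h\<^sup>2) * integral {0..T} (\<lambda>t. (max 0 (y t (Suc N)))\<^sup>2)"
proof -
  define p where "p t k = max 0 (y t k)" for t k
  have p_cont: "continuous_on {0..T} (\<lambda>t. (p t k)\<^sup>2)" for k
    unfolding p_def by (intro continuous_intros cont)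
  have "(\<Sum>k=1..N. (p t k)\<^sup>2) \<le> exp ((4 * A / h\<^sup>2 + 2 * L) * T) * ((\<Sum>k=1..N. (p 0 k)\<^sup>2)
      + integral {0..T} (\<lambda>t. A / h\<^sup>2 * (p t (Suc N))\<^sup>2))"
  proof (rule gronwall_sup_bound[where D="\<lambda>_. 0"
        and Z'="\<lambda>t. \<Sum>k=1..N. 2 * p t k * ((a t k * (y t (Suc k) - y t k) + d t k * (y t (k - 1) - y t k)) / h\<^sup>2 + r t k)"])
    show "0 \<le> T" "0 \<le> 4 * A / h\<^sup>2 + 2 * L" "t \<in> {0..T}" using t A L h by auto
    show "continuous_on {0..T} (\<lambda>t. \<Sum>k=1..N. (p t k)\<^sup>2)"
      "continuous_on {0..T} (\<lambda>t. A / h\<^sup>2 * (p t (Suc N))\<^sup>2)"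
      by (intro continuous_intros p_cont)+
    fix x assume x: "0 < x" "x < T"
    show "((\<lambda>t. \<Sum>k=1..N. (p t k)\<^sup>2) has_real_derivative
        (\<Sum>k=1..N. 2 * p x k * ((a x k * (y x (Suc k) - y x k) + d x k * (y x (k - 1) - y x k)) / h\<^sup>2 + r x k))) (at x)"
      unfolding p_def by (intro DERIV_sum DERIV_max0_square deriv) (use x in auto)
    show "(\<Sum>k=1..N. 2 * p x k * ((a x k * (y x (Suc k) - y x k) + d x k * (y x (k - 1) - y x k)) / h\<^sup>2 + r x k)) + 0
        \<le> (4 * A / h\<^sup>2 + 2 * L) * (\<Sum>k=1..N. (p x k)\<^sup>2) + A / h\<^sup>2 * (p x (Suc N))\<^sup>2"
      unfolding p_def using max_principle_slice[OF h A L, of "y x" "a x" "d x" "r x" N]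
        boundary[of x] coef reaction x by simp
  qed (use A h in \<open>auto intro: sum_nonneg\<close>)
  moreover have "p 0 k = 0" if "1 \<le> k" for k using initial[OF that] unfolding p_def by simp
  ultimately show ?thesis unfolding p_def by (simp add: mult.assoc)
qed

lemma discrete_max_principle:
  fixes y a d r :: "real \<Rightarrow> nat \<Rightarrow> real" and h T A L :: real
  assumes h: "0 < h" and A: "0 \<le> A" and L: "0 \<le> L"
    and cont: "\<And>k. continuous_on {0..T} (\<lambda>t. y t k)"
    and deriv: "\<And>k t. 1 \<le> k \<Longrightarrow> 0 < t \<Longrightarrow> t < T \<Longrightarrow> ((\<lambda>\<tau>. y \<tau> k) has_real_derivative
        (a t k * (y t (Suc k) - y t k) + d t k * (y t (k - 1) - y t k)) / h\<^sup>2 + r t k) (at t)"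
    and coef: "\<And>k t. 1 \<le> k \<Longrightarrow> 0 < t \<Longrightarrow> t < T \<Longrightarrow> 0 \<le> a t k \<and> a t k \<le> A \<and> 0 \<le> d t k \<and> d t k \<le> A"
    and reaction: "\<And>k t. 1 \<le> k \<Longrightarrow> 0 < t \<Longrightarrow> t < T \<Longrightarrow> 0 < y t k \<Longrightarrow> r t k \<le> L * y t k"
    and boundary: "\<And>t. t \<in> {0..T} \<Longrightarrow> y t 0 \<le> 0"
    and initial: "\<And>k. 1 \<le> k \<Longrightarrow> y 0 k \<le> 0"
    and tail: "(\<lambda>N. integral {0..T} (\<lambda>t. (max 0 (y t N))\<^sup>2)) \<longlonglongrightarrow> 0"
    and t: "t \<in> {0..T}"
  shows "y t k \<le> 0"
proof (cases "k = 0")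
  case False
  define C where "C = exp ((4 * A / h\<^sup>2 + 2 * L) * T) * (A / h\<^sup>2)"
  have "(\<lambda>N. C * integral {0..T} (\<lambda>t. (max 0 (y t (Suc N)))\<^sup>2)) \<longlonglongrightarrow> 0"
    by (rule tendsto_mult_right_zero[OF LIMSEQ_Suc[OF tail]])
  moreover have "(max 0 (y t k))\<^sup>2 \<le> C * integral {0..T} (\<lambda>t. (max 0 (y t (Suc N)))\<^sup>2)" if "k \<le> N" for N
  proof -
    have "(max 0 (y t k))\<^sup>2 \<le> (\<Sum>k=1..N. (max 0 (y t k))\<^sup>2)"
      by (rule member_le_sum) (use False that in auto)
    with max_principle_truncated[OF assms(1-9) t, of N] show ?thesis unfolding C_def by linarith
  qed
  ultimately have "(max 0 (y t k))\<^sup>2 \<le> 0" by (intro LIMSEQ_le_const) auto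
  then show ?thesis by simp
qed (use boundary t in auto)

section \<open>The discrete energy identity\<close>

lemma diffusion_summand_le:
  fixes a e w' dw dg dc A K \<eta> :: real
  assumes a: "1/2 \<le> a" "a \<le> A" and e: "\<bar>e\<bar> \<le> K * \<bar>dc\<bar>" and w': "\<bar>w'\<bar> \<le> \<eta>" and K: "0 \<le> K"
  shows "- a * dw * (dw + dg) - e * w' * (dw + dg)
    \<le> - 3/8 * dw\<^sup>2 + (4 * A\<^sup>2 + 1/2) * dg\<^sup>2 + 9/2 * K\<^sup>2 * \<eta>\<^sup>2 * dc\<^sup>2"
proof -
  have t1: "- a * dw * dw \<le> - 1/2 * dw\<^sup>2"
    using mult_right_mono[OF a(1), of "dw * dw"] by (simp add: power2_eq_square algebra_simps)
  have "- a * dw * dg \<le> \<bar>dw\<bar> * (A * \<bar>dg\<bar>)"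
    using a mult_right_mono[OF a(2), of "\<bar>dw\<bar> * \<bar>dg\<bar>"] abs_ge_self[of "- a * dw * dg"]
    by (simp add: abs_mult algebra_simps)
  also have "\<dots> \<le> 1/16 * \<bar>dw\<bar>\<^sup>2 + (A * \<bar>dg\<bar>)\<^sup>2 / (4 * (1/16))"
    by (rule mult_le_weighted_squares) simp
  finally have t2: "- a * dw * dg \<le> 1/16 * dw\<^sup>2 + 4 * A\<^sup>2 * dg\<^sup>2" by (simp add: power_mult_distrib)
  have ew: "\<bar>e * w'\<bar> \<le> K * \<eta> * \<bar>dc\<bar>"
    using mult_mono[OF e w'] K by (simp add: abs_mult algebra_simps)
  have "- e * w' * dw \<le> \<bar>dw\<bar> * (K * \<eta> * \<bar>dc\<bar>)"
    using mult_right_mono[OF ew, of "\<bar>dw\<bar>"] abs_ge_self[of "- e * w' * dw"]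
    by (simp add: abs_mult algebra_simps)
  also have "\<dots> \<le> 1/16 * \<bar>dw\<bar>\<^sup>2 + (K * \<eta> * \<bar>dc\<bar>)\<^sup>2 / (4 * (1/16))"
    by (rule mult_le_weighted_squares) simp
  finally have t3: "- e * w' * dw \<le> 1/16 * dw\<^sup>2 + 4 * K\<^sup>2 * \<eta>\<^sup>2 * dc\<^sup>2" by (simp add: power_mult_distrib)
  have "- e * w' * dg \<le> \<bar>dg\<bar> * (K * \<eta> * \<bar>dc\<bar>)"
    using mult_right_mono[OF ew, of "\<bar>dg\<bar>"] abs_ge_self[of "- e * w' * dg"]
    by (simp add: abs_mult algebra_simps)
  also have "\<dots> \<le> 1/2 * \<bar>dg\<bar>\<^sup>2 + (K * \<eta> * \<bar>dc\<bar>)\<^sup>2 / (4 * (1/2))"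
    by (rule mult_le_weighted_squares) simp
  finally have t4: "- e * w' * dg \<le> 1/2 * dg\<^sup>2 + 1/2 * K\<^sup>2 * \<eta>\<^sup>2 * dc\<^sup>2" by (simp add: power_mult_distrib)
  have "- a * dw * (dw + dg) - e * w' * (dw + dg) = - a * dw * dw + - a * dw * dg + - e * w' * dw + - e * w' * dg"
    by (simp add: algebra_simps)
  with t1 t2 t3 t4 show ?thesis by (simp add: algebra_simps)
qed

lemma diffusion_energy_le:
  fixes s w g c a d :: "nat \<Rightarrow> real" and A K \<eta> :: real
  assumes split: "\<And>k. s k = w k + g k" and w0: "w 0 = 0"
    and a: "\<And>k. 1/2 \<le> a k \<and> a k \<le> A" and d: "\<And>k. 1/2 \<le> d k \<and> d k \<le> A"
    and jump: "\<And>k. \<bar>d (Suc k) - a k\<bar> \<le> K * \<bar>c (Suc k) - c k\<bar>"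
    and w_bound: "\<And>k. \<bar>w k\<bar> \<le> \<eta>" and K: "0 \<le> K"
  shows "(\<Sum>k=1..Suc n. w k * (a k * (s (Suc k) - s k) + d k * (s (k - 1) - s k)))
    \<le> - 3/8 * ((w 1)\<^sup>2 + (\<Sum>k=1..n. (w (Suc k) - w k)\<^sup>2))
      + (4 * A\<^sup>2 + 1/2) * (\<Sum>k=0..n. (g (Suc k) - g k)\<^sup>2)
      + 9/2 * K\<^sup>2 * \<eta>\<^sup>2 * (\<Sum>k=1..n. (c (Suc k) - c k)\<^sup>2)
      + a (Suc n) * w (Suc n) * (s (Suc (Suc n)) - s (Suc n))"
proof -
  define dw where "dw k = w (Suc k) - w k" for k
  define dg where "dg k = g (Suc k) - g k" for k
  define dc where "dc k = c (Suc k) - c k" for k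
  have ds: "s (Suc k) - s k = dw k + dg k" for k unfolding dw_def dg_def split by simp
  have ds0: "s 1 - s 0 = w 1 + dg 0" unfolding dg_def split using w0 by simp
  have "(\<Sum>k=1..Suc n. w k * (a k * (s (Suc k) - s k) + d k * (s (k - 1) - s k)))
      = (\<Sum>k=1..Suc n. w k * (a k * (s (Suc k) - s k) - d k * (s k - s (k - 1))))"
    by (simp add: algebra_simps)
  also have "\<dots> = (\<Sum>k=1..n. - a k * dw k * (dw k + dg k) - (d (Suc k) - a k) * w (Suc k) * (dw k + dg k))
      + (- d 1 * w 1 * (w 1 + dg 0)) + a (Suc n) * w (Suc n) * (s (Suc (Suc n)) - s (Suc n))"
    unfolding summation_by_parts unfolding ds ds0 dw_def
    by (simp add: sum_subtractf[symmetric] sum_negf[symmetric] algebra_simps)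
  also have "\<dots> \<le> (\<Sum>k=1..n. - 3/8 * (dw k)\<^sup>2 + (4 * A\<^sup>2 + 1/2) * (dg k)\<^sup>2 + 9/2 * K\<^sup>2 * \<eta>\<^sup>2 * (dc k)\<^sup>2)
      + (- 3/8 * (w 1)\<^sup>2 + (4 * A\<^sup>2 + 1/2) * (dg 0)\<^sup>2) + a (Suc n) * w (Suc n) * (s (Suc (Suc n)) - s (Suc n))"
  proof (intro add_mono order_refl sum_mono)
    show "- a k * dw k * (dw k + dg k) - (d (Suc k) - a k) * w (Suc k) * (dw k + dg k)
        \<le> - 3/8 * (dw k)\<^sup>2 + (4 * A\<^sup>2 + 1/2) * (dg k)\<^sup>2 + 9/2 * K\<^sup>2 * \<eta>\<^sup>2 * (dc k)\<^sup>2" for k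
      unfolding dc_def by (rule diffusion_summand_le) (use a jump w_bound K in auto)
    show "- d 1 * w 1 * (w 1 + dg 0) \<le> - 3/8 * (w 1)\<^sup>2 + (4 * A\<^sup>2 + 1/2) * (dg 0)\<^sup>2"
      using diffusion_summand_le[of "d 1" A 0 K 0 0 0 "w 1" "dg 0"] d[of 1] K by simp
  qed
  also have "\<dots> = - 3/8 * ((w 1)\<^sup>2 + (\<Sum>k=1..n. (dw k)\<^sup>2)) + (4 * A\<^sup>2 + 1/2) * (\<Sum>k=0..n. (dg k)\<^sup>2)
      + 9/2 * K\<^sup>2 * \<eta>\<^sup>2 * (\<Sum>k=1..n. (dc k)\<^sup>2) + a (Suc n) * w (Suc n) * (s (Suc (Suc n)) - s (Suc n))"
  proof -
    have "(\<Sum>k=1..n. - 3/8 * (dw k)\<^sup>2 + (4 * A\<^sup>2 + 1/2) * (dg k)\<^sup>2 + 9/2 * K\<^sup>2 * \<eta>\<^sup>2 * (dc k)\<^sup>2)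
        = - 3/8 * (\<Sum>k=1..n. (dw k)\<^sup>2) + (4 * A\<^sup>2 + 1/2) * (\<Sum>k=1..n. (dg k)\<^sup>2)
          + 9/2 * K\<^sup>2 * \<eta>\<^sup>2 * (\<Sum>k=1..n. (dc k)\<^sup>2)"
      by (simp only: sum.distrib sum_distrib_left)
    moreover have "(\<Sum>k=0..n. (dg k)\<^sup>2) = (dg 0)\<^sup>2 + (\<Sum>k=1..n. (dg k)\<^sup>2)"
      by (simp add: sum.atLeast_Suc_atMost)
    ultimately show ?thesis by (simp add: algebra_simps)
  qed
  finally show ?thesis unfolding dw_def dg_def dc_def .
qed

section \<open>Lifting the boundary datum into the interior\<close>

locale boundary_lifting =
  fixes T \<eta> \<beta> M :: real and \<psi> :: "real \<Rightarrow> real" and h :: real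
  assumes T: "0 < T" and beta: "1/4 < \<beta>" "\<beta> < 1/2"
    and holder: "holder_bdd \<beta> T \<psi> M"
    and psi_range: "\<forall>t\<in>{0..T}. 0 \<le> \<psi> t \<and> \<psi> t \<le> \<eta>" and psi0: "\<psi> 0 = 0"
    and h: "0 < h"
begin

definition psi_ext :: "real \<Rightarrow> real" where
  "psi_ext u = \<psi> (max 0 (min T u))"

text \<open>Any base point below \<open>-1\<close> would do: all averaging windows used below lie in \<open>[-1, T]\<close>.\<close>

definition psi_primitive :: "real \<Rightarrow> real" where
  "psi_primitive x = integral {-2..x} psi_ext"

definition psi_avg :: "real \<Rightarrow> real \<Rightarrow> real" where
  "psi_avg \<sigma> t = (psi_primitive t - psi_primitive (t - \<sigma>)) / \<sigma>"

definition cutoff :: "nat \<Rightarrow> real" where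
  "cutoff k = max 0 (1 - real k * h)"

definition window :: "nat \<Rightarrow> real" where
  "window k = (real k * h)\<^sup>2"

definition lift_avg :: "nat \<Rightarrow> real \<Rightarrow> real" where
  "lift_avg k t = (if k = 0 then psi_ext t else psi_avg (window k) t)"

definition lift :: "real \<Rightarrow> nat \<Rightarrow> real" where
  "lift t k = cutoff k * lift_avg k t"

definition lift_dt :: "real \<Rightarrow> nat \<Rightarrow> real" where
  "lift_dt t k = cutoff k * ((psi_ext t - psi_ext (t - window k)) / window k)"

definition lift_grad_bound :: real where
  "lift_grad_bound = 2 * M\<^sup>2 + 72 * M\<^sup>2 / (4 * \<beta> - 1) + 2 * \<eta>\<^sup>2"

lemma M_nonneg: "0 \<le> M"
  using holder T unfolding holder_bdd_def
  by (metis abs_ge_zero atLeastAtMost_iff less_imp_le order_trans order_refl)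

lemma clamp_in: "max 0 (min T u) \<in> {0..T}"
  using T by auto

lemma psi_ext_eq: "t \<in> {0..T} \<Longrightarrow> psi_ext t = \<psi> t"
  unfolding psi_ext_def by (simp add: max_absorb2)

lemma psi_ext_range: "0 \<le> psi_ext u \<and> psi_ext u \<le> \<eta>"
  unfolding psi_ext_def using psi_range clamp_in[of u] by blast

lemma psi_ext_nonpos: "u \<le> 0 \<Longrightarrow> psi_ext u = 0"
  unfolding psi_ext_def using psi0 T by (simp add: max_def min_def)

lemma psi_ext_holder: "\<bar>psi_ext u - psi_ext v\<bar> \<le> M * \<bar>u - v\<bar> powr \<beta>"
proof -
  have "\<bar>psi_ext u - psi_ext v\<bar> \<le> M * \<bar>max 0 (min T u) - max 0 (min T v)\<bar> powr \<beta>"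
    using holder clamp_in[of u] clamp_in[of v] unfolding holder_bdd_def psi_ext_def by blast
  also have "\<dots> \<le> M * \<bar>u - v\<bar> powr \<beta>"
    using beta M_nonneg by (intro mult_left_mono powr_mono2) (auto simp: max_def min_def)
  finally show ?thesis .
qed

lemma psi_ext_cont: "continuous_on UNIV psi_ext"
  using beta psi_ext_holder by (intro holder_imp_continuous) auto

lemma psi_cont: "continuous_on {0..T} \<psi>"
  using continuous_on_subset[OF psi_ext_cont subset_UNIV] by (rule continuous_on_eq) (simp add: psi_ext_eq)

lemma psi_ext_integrable: "psi_ext integrable_on {a..b}"
  by (rule integrable_continuous_real, rule continuous_on_subset[OF psi_ext_cont]) auto

lemma psi_primitive_deriv: "-2 < x \<Longrightarrow> (psi_primitive has_real_derivative psi_ext x) (at x)"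
proof -
  assume x: "-2 < x"
  have "(psi_primitive has_real_derivative psi_ext x) (at x within {-2..x+1})"
    unfolding psi_primitive_def
    by (rule integral_has_real_derivative[OF continuous_on_subset[OF psi_ext_cont]]) (use x in auto)
  moreover have "x \<in> interior {-2..x+1}" using x by auto
  ultimately show ?thesis by (metis at_within_interior)
qed

lemma psi_avg_eq_integral: "0 < \<sigma> \<Longrightarrow> -2 \<le> t - \<sigma> \<Longrightarrow> psi_avg \<sigma> t = integral {t - \<sigma>..t} psi_ext / \<sigma>"
  unfolding psi_avg_def psi_primitive_def
  using Henstock_Kurzweil_Integration.integral_combine[of "-2" "t - \<sigma>" t psi_ext] psi_ext_integrable
  by (simp add: algebra_simps)

lemma psi_avg_range: "0 < \<sigma> \<Longrightarrow> -2 \<le> t - \<sigma> \<Longrightarrow> 0 \<le> psi_avg \<sigma> t \<and> psi_avg \<sigma> t \<le> \<eta>"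
proof -
  assume \<sigma>: "0 < \<sigma>" "-2 \<le> t - \<sigma>"
  have "integral {t - \<sigma>..t} psi_ext \<le> integral {t - \<sigma>..t} (\<lambda>_. \<eta>)"
    by (rule integral_le[OF psi_ext_integrable]) (auto simp: psi_ext_range)
  moreover have "0 \<le> integral {t - \<sigma>..t} psi_ext"
    by (rule integral_nonneg[OF psi_ext_integrable]) (auto simp: psi_ext_range)
  ultimately show ?thesis
    using psi_avg_eq_integral[OF \<sigma>] \<sigma> by (simp add: divide_le_eq mult.commute)
qed

lemma psi_avg_close: "0 < \<sigma> \<Longrightarrow> -2 \<le> t - \<sigma> \<Longrightarrow> \<bar>psi_avg \<sigma> t - psi_ext t\<bar> \<le> M * \<sigma> powr \<beta>"
proof -
  assume \<sigma>: "0 < \<sigma>" "-2 \<le> t - \<sigma>"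
  define C where "C = M * \<sigma> powr \<beta>"
  have close: "\<bar>psi_ext u - psi_ext t\<bar> \<le> C" if "u \<in> {t - \<sigma>..t}" for u
  proof -
    have "\<bar>psi_ext u - psi_ext t\<bar> \<le> M * \<bar>u - t\<bar> powr \<beta>" by (rule psi_ext_holder)
    also have "\<dots> \<le> C"
      unfolding C_def using that beta by (intro mult_left_mono[OF _ M_nonneg] powr_mono2) auto
    finally show ?thesis .
  qed
  have int: "(\<lambda>u. psi_ext u - psi_ext t) integrable_on {t - \<sigma>..t}"
    by (intro integrable_diff psi_ext_integrable integrable_const_ivl)
  have "norm (integral {t - \<sigma>..t} (\<lambda>u. psi_ext u - psi_ext t)) \<le> integral {t - \<sigma>..t} (\<lambda>_. C)"
    by (rule integral_norm_bound_integral[OF int integrable_const_ivl]) (use close in auto)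
  moreover have "integral {t - \<sigma>..t} (\<lambda>u. psi_ext u - psi_ext t) = \<sigma> * (psi_avg \<sigma> t - psi_ext t)"
    using \<sigma> psi_avg_eq_integral[OF \<sigma>]
    by (simp add: integral_diff[OF psi_ext_integrable integrable_const_ivl] algebra_simps)
  ultimately have "\<sigma> * \<bar>psi_avg \<sigma> t - psi_ext t\<bar> \<le> \<sigma> * C" using \<sigma> by (simp add: abs_mult)
  then show ?thesis unfolding C_def using \<sigma> by simp
qed

lemma psi_avg_deriv_window:
  assumes "0 < \<sigma>" "-2 < t - \<sigma>"
  shows "((\<lambda>\<sigma>. psi_avg \<sigma> t) has_real_derivative (psi_ext (t - \<sigma>) - psi_avg \<sigma> t) / \<sigma>) (at \<sigma>)"
proof -
  have "((\<lambda>\<sigma>. psi_primitive (t - \<sigma>)) has_real_derivative psi_ext (t - \<sigma>) * (0 - 1)) (at \<sigma>)"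
    by (rule DERIV_chain2[where g="\<lambda>\<sigma>. t - \<sigma>", OF psi_primitive_deriv[OF assms(2)]])
      (intro derivative_intros)
  from DERIV_divide[OF DERIV_diff[OF DERIV_const this] DERIV_ident] assms(1)
  show ?thesis unfolding psi_avg_def by (simp add: field_simps power2_eq_square)
qed

lemma psi_avg_deriv:
  assumes "-2 < t - \<sigma>" "-2 < t"
  shows "((\<lambda>t. psi_avg \<sigma> t) has_real_derivative (psi_ext t - psi_ext (t - \<sigma>)) / \<sigma>) (at t)"
proof -
  have "((\<lambda>t. psi_primitive (t - \<sigma>)) has_real_derivative psi_ext (t - \<sigma>) * (1 - 0)) (at t)"
    by (rule DERIV_chain2[where g="\<lambda>t. t - \<sigma>", OF psi_primitive_deriv[OF assms(1)]])
      (intro derivative_intros)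
  from DERIV_cdivide[OF DERIV_diff[OF psi_primitive_deriv[OF assms(2)] this]]
  show ?thesis unfolding psi_avg_def by simp
qed

text \<open>Mean value theorem in the window length: the derivative
  \<open>(psi_ext (t - \<sigma>) - psi_avg \<sigma> t) / \<sigma>\<close> is \<open>O(\<sigma> powr (\<beta> - 1))\<close> by Hoelder continuity.\<close>

lemma psi_avg_window_diff:
  assumes "0 < s1" "s1 \<le> s2" "-1 \<le> t - s2"
  shows "\<bar>psi_avg s2 t - psi_avg s1 t\<bar> \<le> (s2 - s1) * (2 * M * s1 powr (\<beta> - 1))"
proof (cases "s1 = s2")
  case False
  with assms have lt: "s1 < s2" by simp
  have "((\<lambda>\<sigma>. psi_avg \<sigma> t) has_real_derivative (psi_ext (t - x) - psi_avg x t) / x) (at x)"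
    if "s1 \<le> x" "x \<le> s2" for x
    by (rule psi_avg_deriv_window) (use that assms in auto)
  from MVT2[OF lt this] obtain z where
    z: "s1 < z" "z < s2" "psi_avg s2 t - psi_avg s1 t = (s2 - s1) * ((psi_ext (t - z) - psi_avg z t) / z)"
    by blast
  with assms have z0: "0 < z" by simp
  have "\<bar>psi_ext (t - z) - psi_ext t\<bar> \<le> M * z powr \<beta>"
    using psi_ext_holder[of "t - z" t] z0 by simp
  moreover have "\<bar>psi_avg z t - psi_ext t\<bar> \<le> M * z powr \<beta>"
    by (rule psi_avg_close) (use z0 z assms in auto)
  ultimately have "\<bar>psi_ext (t - z) - psi_avg z t\<bar> / z \<le> 2 * M * z powr \<beta> / z"
    using z0 by (intro divide_right_mono) auto
  also have "\<dots> = 2 * M * z powr (\<beta> - 1)" using z0 by (simp add: powr_diff)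
  also have "\<dots> \<le> 2 * M * s1 powr (\<beta> - 1)"
    using M_nonneg beta z assms by (intro mult_left_mono powr_mono2') auto
  finally have "\<bar>psi_ext (t - z) - psi_avg z t\<bar> / z \<le> 2 * M * s1 powr (\<beta> - 1)" .
  then have "(s2 - s1) * (\<bar>psi_ext (t - z) - psi_avg z t\<bar> / z) \<le> (s2 - s1) * (2 * M * s1 powr (\<beta> - 1))"
    using lt by (intro mult_left_mono) auto
  then show ?thesis using z(3) lt z0 by (simp add: abs_mult abs_divide)
qed simp

lemma cutoff_range: "0 \<le> cutoff k \<and> cutoff k \<le> 1"
  unfolding cutoff_def using h by auto

lemma cutoff_pos_iff: "0 < cutoff k \<longleftrightarrow> real k * h < 1"
  unfolding cutoff_def by auto

lemma cutoff_antimono: "cutoff (Suc k) \<le> cutoff k"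
  unfolding cutoff_def using h by (intro max.mono) (simp_all add: algebra_simps)

lemma cutoff_step: "cutoff k - cutoff (Suc k) \<le> h"
  unfolding cutoff_def using h by (auto simp: max_def algebra_simps)

lemma window_pos: "1 \<le> k \<Longrightarrow> 0 < window k"
  unfolding window_def using h by simp

lemma window_lt_1: "0 < cutoff k \<Longrightarrow> window k < 1"
  unfolding window_def cutoff_pos_iff using h by (simp add: power_less_one_iff abs_less_iff)

lemma lift_at_0: "t \<in> {0..T} \<Longrightarrow> lift t 0 = \<psi> t"
  unfolding lift_def lift_avg_def cutoff_def using psi_ext_eq by simp

lemma lift_avg_range: "t \<in> {0..T} \<Longrightarrow> 0 < cutoff k \<Longrightarrow> 0 \<le> lift_avg k t \<and> lift_avg k t \<le> \<eta>"
proof (cases "k = 0")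
  case False
  assume "t \<in> {0..T}" "0 < cutoff k"
  with False window_pos[of k] window_lt_1[of k] have "0 < window k" "-2 \<le> t - window k" by auto
  with False show ?thesis unfolding lift_avg_def by (simp add: psi_avg_range)
qed (simp add: lift_avg_def psi_ext_range)

lemma eta_nonneg: "0 \<le> \<eta>"
  using psi_range T by force

lemma lift_range: "t \<in> {0..T} \<Longrightarrow> 0 \<le> lift t k \<and> lift t k \<le> \<eta>"
proof (cases "cutoff k = 0")
  case False
  assume t: "t \<in> {0..T}"
  with False cutoff_range[of k] have "0 \<le> lift_avg k t \<and> lift_avg k t \<le> \<eta>"
    by (intro lift_avg_range) auto
  with cutoff_range[of k] have "0 \<le> lift t k" "lift t k \<le> 1 * \<eta>"
    unfolding lift_def by (simp, intro mult_mono) auto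
  then show ?thesis by simp
qed (simp add: lift_def eta_nonneg)

lemma lift_initial: "1 \<le> k \<Longrightarrow> lift 0 k = 0"
proof (cases "cutoff k = 0")
  case False
  assume k: "1 \<le> k"
  with False cutoff_range[of k] have w: "0 < window k" "window k < 1"
    using window_pos window_lt_1 by auto
  have "integral {0 - window k..0} psi_ext = integral {0 - window k..0} (\<lambda>_. 0)"
    by (rule integral_cong) (auto intro: psi_ext_nonpos)
  then show ?thesis unfolding lift_def lift_avg_def using k w psi_avg_eq_integral[of "window k" 0] by simp
qed (simp add: lift_def)

lemma lift_deriv: "1 \<le> k \<Longrightarrow> 0 < t \<Longrightarrow> ((\<lambda>t. lift t k) has_real_derivative lift_dt t k) (at t)"
proof (cases "cutoff k = 0")
  case False
  assume k: "1 \<le> k" and t: "0 < t"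
  with False cutoff_range[of k] have "window k < 1" using window_lt_1 by auto
  with t have "((\<lambda>t. psi_avg (window k) t) has_real_derivative
      (psi_ext t - psi_ext (t - window k)) / window k) (at t)"
    by (intro psi_avg_deriv) auto
  from DERIV_cmult[OF this, of "cutoff k"] k
  show ?thesis unfolding lift_def lift_dt_def lift_avg_def by simp
qed (simp add: lift_def lift_dt_def)

lemma lift_cont: "continuous_on {0..T} (\<lambda>t. lift t k)"
proof -
  consider "k = 0" | "cutoff k = 0" | "1 \<le> k" "0 < cutoff k"
    using cutoff_range[of k] by fastforce
  then show ?thesis
  proof cases
    case 1
    then show ?thesis unfolding lift_def lift_avg_def
      by (auto intro!: continuous_intros continuous_on_subset[OF psi_ext_cont])
  next
    case 2
    then show ?thesis unfolding lift_def by simp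
  next
    case 3
    have "window k < 1" using window_lt_1 3(2) by blast
    then have "isCont (\<lambda>t. psi_avg (window k) t) t" if "t \<in> {0..T}" for t
      using that by (intro DERIV_isCont[OF psi_avg_deriv]) auto
    then have "isCont (\<lambda>t. lift t k) t" if "t \<in> {0..T}" for t
      unfolding lift_def lift_avg_def using 3 that by (auto intro!: continuous_intros)
    then show ?thesis by (intro continuous_at_imp_continuous_on ballI)
  qed
qed

lemma lift_dt_bound: "1 \<le> k \<Longrightarrow>
  \<bar>lift_dt t k\<bar> \<le> (if real k * h \<le> 1 then M * (real k * h) powr (- (2 - 2 * \<beta>)) else 0)"
proof (cases "cutoff k = 0")
  case False
  assume k: "1 \<le> k"
  with False cutoff_range[of k] have c: "0 < cutoff k" "cutoff k \<le> 1" by auto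
  with k h have kh: "real k * h < 1" "0 < real k * h" by (auto simp: cutoff_pos_iff)
  have w: "0 < window k" using window_pos[OF k] .
  have "\<bar>lift_dt t k\<bar> = cutoff k * (\<bar>psi_ext t - psi_ext (t - window k)\<bar> / window k)"
    unfolding lift_dt_def using c w by (simp add: abs_mult abs_divide)
  also have "\<dots> \<le> 1 * (M * window k powr \<beta> / window k)"
    using c w psi_ext_holder[of t "t - window k"] by (intro mult_mono divide_right_mono) auto
  also have "\<dots> = M * (real k * h) powr (- (2 - 2 * \<beta>))"
    unfolding window_def using kh square_powr[OF kh(2)] by (simp add: powr_diff algebra_simps)
  finally show ?thesis using kh by simp
qed (use M_nonneg in \<open>simp add: lift_dt_def\<close>)

lemma lift_avg_diff_0: "0 < cutoff 1 \<Longrightarrow> t \<in> {0..T} \<Longrightarrow> \<bar>lift_avg 1 t - lift_avg 0 t\<bar> \<le> M * h powr (2 * \<beta>)"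
  unfolding lift_avg_def using psi_avg_close[of "window 1" t] window_pos[of 1] window_lt_1[of 1]
  by (simp add: window_def square_powr[OF h])

lemma lift_avg_diff:
  assumes k: "1 \<le> k" and c: "0 < cutoff (Suc k)" and t: "t \<in> {0..T}"
  shows "\<bar>lift_avg (Suc k) t - lift_avg k t\<bar> \<le> 6 * M * h * (real k * h) powr (2 * \<beta> - 1)"
proof -
  have w: "0 < window k" "window k \<le> window (Suc k)" "window (Suc k) < 1"
    using window_pos[OF k] window_lt_1[OF c] h unfolding window_def
    by (auto intro!: power_mono mult_right_mono)
  have kh: "0 < real k * h" using k h by simp
  have "\<bar>psi_avg (window (Suc k)) t - psi_avg (window k) t\<bar>
      \<le> (window (Suc k) - window k) * (2 * M * window k powr (\<beta> - 1))"
    by (rule psi_avg_window_diff) (use w t in auto)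
  also have "\<dots> \<le> (3 * real k * h\<^sup>2) * (2 * M * window k powr (\<beta> - 1))"
  proof (rule mult_right_mono)
    have "window (Suc k) - window k = (2 * real k + 1) * h\<^sup>2"
      unfolding window_def by (simp add: power2_eq_square algebra_simps)
    also have "\<dots> \<le> (3 * real k) * h\<^sup>2" using k by (intro mult_right_mono) auto
    finally show "window (Suc k) - window k \<le> 3 * real k * h\<^sup>2" by simp
  qed (use M_nonneg in simp)
  also have "\<dots> = 6 * M * h * ((real k * h) * (real k * h) powr (2 * \<beta> - 2))"
    unfolding window_def using square_powr[OF kh, of "\<beta> - 1"] kh
    by (simp add: power2_eq_square algebra_simps)
  also have "(real k * h) * (real k * h) powr (2 * \<beta> - 2) = (real k * h) powr (2 * \<beta> - 1)"
    using kh by (simp add: powr_mult_base)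
  finally show ?thesis unfolding lift_avg_def using k by simp
qed

lemma lift_grad_cutoff_part:
  "t \<in> {0..T} \<Longrightarrow> ((cutoff (Suc k) - cutoff k) * lift_avg k t)\<^sup>2 \<le> \<eta>\<^sup>2 * (h * (cutoff k - cutoff (Suc k)))"
proof (cases "cutoff k = 0")
  case True
  then have "cutoff (Suc k) = 0" using cutoff_antimono[of k] cutoff_range[of "Suc k"] by simp
  with True show ?thesis by simp
next
  case False
  assume t: "t \<in> {0..T}"
  have A: "(lift_avg k t)\<^sup>2 \<le> \<eta>\<^sup>2"
    using lift_avg_range[OF t, of k] False cutoff_range[of k] by (intro power_mono) auto
  have d: "0 \<le> cutoff k - cutoff (Suc k)" "cutoff k - cutoff (Suc k) \<le> h"
    using cutoff_antimono[of k] cutoff_step[of k] by auto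
  have "(cutoff (Suc k) - cutoff k)\<^sup>2 \<le> h * (cutoff k - cutoff (Suc k))"
    using mult_right_mono[OF d(2) d(1)] by (simp add: power2_eq_square algebra_simps)
  with A d h have "(cutoff (Suc k) - cutoff k)\<^sup>2 * (lift_avg k t)\<^sup>2 \<le> (h * (cutoff k - cutoff (Suc k))) * \<eta>\<^sup>2"
    by (intro mult_mono) auto
  then show ?thesis by (simp add: power_mult_distrib mult.commute)
qed

lemma lift_grad_avg_part_0:
  "t \<in> {0..T} \<Longrightarrow> (cutoff 1 * (lift_avg 1 t - lift_avg 0 t))\<^sup>2 \<le> M\<^sup>2 * h"
proof (cases "cutoff 1 = 0")
  case False
  assume t: "t \<in> {0..T}"
  with False cutoff_range[of 1] have c: "0 < cutoff 1" "cutoff 1 \<le> 1" by auto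
  then have h1: "h < 1" by (simp add: cutoff_pos_iff)
  have "(cutoff 1 * (lift_avg 1 t - lift_avg 0 t))\<^sup>2 \<le> (lift_avg 1 t - lift_avg 0 t)\<^sup>2"
    using c by (simp add: power_mult_distrib mult_left_le_one_le power_le_one)
  also have "\<dots> \<le> (M * h powr (2 * \<beta>))\<^sup>2"
    using lift_avg_diff_0[OF c(1) t] by (simp add: abs_le_square_iff flip: abs_le_square_iff)
  also have "\<dots> = M\<^sup>2 * (h powr (4 * \<beta> - 1) * h)"
  proof -
    have "h * h powr (4 * \<beta> - 1) = h powr (4 * \<beta>)" using h by (simp add: powr_mult_base)
    then show ?thesis by (simp add: power_mult_distrib power2_eq_square mult.commute flip: powr_add)
  qed
  also have "\<dots> \<le> M\<^sup>2 * (1 * h)"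
    using h h1 beta by (intro mult_left_mono mult_right_mono powr_le1) auto
  finally show ?thesis by simp
qed (use h in simp)

lemma lift_grad_avg_part:
  "1 \<le> k \<Longrightarrow> t \<in> {0..T} \<Longrightarrow> (cutoff (Suc k) * (lift_avg (Suc k) t - lift_avg k t))\<^sup>2
     \<le> 36 * M\<^sup>2 * h\<^sup>2 * (if real k * h \<le> 1 then (real k * h) powr (- (2 - 4 * \<beta>)) else 0)"
proof (cases "cutoff (Suc k) = 0")
  case False
  assume k: "1 \<le> k" and t: "t \<in> {0..T}"
  with False cutoff_range[of "Suc k"] have c: "0 < cutoff (Suc k)" "cutoff (Suc k) \<le> 1" by auto
  then have "real (Suc k) * h < 1" by (simp add: cutoff_pos_iff)
  with k h have kh: "real k * h \<le> 1" "0 < real k * h" by (auto simp: algebra_simps)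
  have "(cutoff (Suc k) * (lift_avg (Suc k) t - lift_avg k t))\<^sup>2 \<le> (lift_avg (Suc k) t - lift_avg k t)\<^sup>2"
    using c by (simp add: power_mult_distrib mult_left_le_one_le power_le_one)
  also have "\<dots> \<le> (6 * M * h * (real k * h) powr (2 * \<beta> - 1))\<^sup>2"
    using lift_avg_diff[OF k c(1) t] by (simp flip: abs_le_square_iff)
  also have "\<dots> = 36 * M\<^sup>2 * h\<^sup>2 * (real k * h) powr (- (2 - 4 * \<beta>))"
    using kh by (simp add: power_mult_distrib power2_eq_square flip: powr_add)
  finally show ?thesis using kh by simp
qed (use h in simp)

lemma lift_diff_sum_le:
  assumes t: "t \<in> {0..T}"
  shows "(1 / h) * (\<Sum>k=0..n. (lift t (Suc k) - lift t k)\<^sup>2) \<le> lift_grad_bound"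
proof -
  define u where "u k = (cutoff (Suc k) * (lift_avg (Suc k) t - lift_avg k t))\<^sup>2" for k
  define v where "v k = ((cutoff (Suc k) - cutoff k) * lift_avg k t)\<^sup>2" for k
  have split: "(lift t (Suc k) - lift t k)\<^sup>2 \<le> 2 * u k + 2 * v k" for k
  proof -
    have "lift t (Suc k) - lift t k
        = cutoff (Suc k) * (lift_avg (Suc k) t - lift_avg k t) + (cutoff (Suc k) - cutoff k) * lift_avg k t"
      unfolding lift_def by (simp add: algebra_simps)
    then show ?thesis unfolding u_def v_def by (simp add: square_add_le)
  qed
  have "(\<Sum>k=0..n. v k) \<le> (\<Sum>k=0..n. \<eta>\<^sup>2 * (h * (cutoff k - cutoff (Suc k))))"
    unfolding v_def using lift_grad_cutoff_part[OF t] by (intro sum_mono)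
  also have "\<dots> = \<eta>\<^sup>2 * h * (cutoff 0 - cutoff (Suc n))"
    by (simp add: sum_distrib_left[symmetric] atLeast0AtMost sum_telescope mult.assoc)
  also have "\<dots> \<le> \<eta>\<^sup>2 * h"
    using cutoff_range[of "Suc n"] h by (simp add: cutoff_def mult_left_le)
  finally have v_sum: "(\<Sum>k=0..n. v k) \<le> \<eta>\<^sup>2 * h" .
  have "(\<Sum>k=0..n. u k) = u 0 + (\<Sum>k=1..n. u k)" by (simp add: sum.atLeast_Suc_atMost)
  also have "\<dots> \<le> M\<^sup>2 * h + (\<Sum>k=1..n. 36 * M\<^sup>2 * h\<^sup>2 *
      (if real k * h \<le> 1 then (real k * h) powr (- (2 - 4 * \<beta>)) else 0))"
    unfolding u_def using lift_grad_avg_part_0[OF t] lift_grad_avg_part[OF _ t]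
    by (intro add_mono sum_mono) auto
  also have "\<dots> = M\<^sup>2 * h + 36 * M\<^sup>2 * h *
      (h * (\<Sum>k=1..n. (if real k * h \<le> 1 then (real k * h) powr (- (2 - 4 * \<beta>)) else 0)))"
    by (simp add: sum_distrib_left power2_eq_square algebra_simps)
  also have "\<dots> \<le> M\<^sup>2 * h + 36 * M\<^sup>2 * h * (1 / (1 - (2 - 4 * \<beta>)))"
    using h beta by (intro add_left_mono mult_left_mono riemann_sum_powr_le) auto
  finally have u_sum: "(\<Sum>k=0..n. u k) \<le> M\<^sup>2 * h + 36 * M\<^sup>2 * h / (4 * \<beta> - 1)" by simp
  have "(1 / h) * (\<Sum>k=0..n. (lift t (Suc k) - lift t k)\<^sup>2) \<le> (1 / h) * (2 * (\<Sum>k=0..n. u k) + 2 * (\<Sum>k=0..n. v k))"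
  proof (intro mult_left_mono)
    have "(\<Sum>k=0..n. (lift t (Suc k) - lift t k)\<^sup>2) \<le> (\<Sum>k=0..n. 2 * u k + 2 * v k)"
      by (intro sum_mono split)
    then show "(\<Sum>k=0..n. (lift t (Suc k) - lift t k)\<^sup>2) \<le> 2 * (\<Sum>k=0..n. u k) + 2 * (\<Sum>k=0..n. v k)"
      by (simp add: sum.distrib sum_distrib_left)
  qed (use h in simp)
  also have "\<dots> \<le> (1 / h) * (2 * (M\<^sup>2 * h + 36 * M\<^sup>2 * h / (4 * \<beta> - 1)) + 2 * (\<eta>\<^sup>2 * h))"
    using u_sum v_sum h by (intro mult_left_mono add_mono) auto
  also have "\<dots> = lift_grad_bound" unfolding lift_grad_bound_def using h by (simp add: field_simps)
  finally show ?thesis .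
qed

lemma lift_l2_bound: "t \<in> {0..T} \<Longrightarrow> h * (\<Sum>k=1..N. (lift t k)\<^sup>2) \<le> \<eta>\<^sup>2"
proof -
  assume t: "t \<in> {0..T}"
  have "(lift t k)\<^sup>2 \<le> \<eta>\<^sup>2 * (if real k * h \<le> 1 then 1 else 0)" for k
  proof (cases "real k * h < 1")
    case True
    then show ?thesis using lift_range[OF t, of k] by (simp add: power_mono)
  next
    case False
    then have "cutoff k = 0" using cutoff_range[of k] cutoff_pos_iff[of k] by simp
    then show ?thesis unfolding lift_def by simp
  qed
  then have "h * (\<Sum>k=1..N. (lift t k)\<^sup>2) \<le> h * (\<Sum>k=1..N. \<eta>\<^sup>2 * (if real k * h \<le> 1 then 1 else 0))"
    using h by (intro mult_left_mono sum_mono) auto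
  also have "\<dots> = \<eta>\<^sup>2 * (h * (\<Sum>k=1..N. (if real k * h \<le> 1 then (real k * h) powr (- 0) else 0)))"
    using h by (simp add: sum_distrib_left algebra_simps cong: if_cong)
  also have "\<dots> \<le> \<eta>\<^sup>2 * (1 / (1 - 0))"
    using h by (intro mult_left_mono riemann_sum_powr_le) auto
  finally show ?thesis by simp
qed

end

section \<open>The solution of the space-discrete system\<close>

locale NS_solution_estimate = boundary_lifting T \<eta> \<beta> M\<psi> \<psi> h
  for T \<eta> \<beta> M\<psi> :: real and \<psi> :: "real \<Rightarrow> real" and h :: real +
  fixes lam C0 cm \<phi>min \<phi>max B Ms0 Mc0 :: real
    and s0 c0 :: "nat \<Rightarrow> real" and s c :: "real \<Rightarrow> nat \<Rightarrow> real"
  assumes B: "B = -1 \<or> B = 1" and lam: "0 < lam" and eta: "0 < \<eta>"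
    and cm: "0 < cm" "cm \<le> C0" and phi_min: "0 < \<phi>min"
    and phi_range: "\<forall>x\<in>{0..C0}. \<phi>min \<le> phi B x \<and> phi B x \<le> \<phi>max"
    and eta_lt_1: "B = 1 \<longrightarrow> \<eta> < 1"
    and s0_range: "\<forall>k. 0 \<le> s0 k \<and> s0 k \<le> \<eta>"
    and s0_l2: "in_l2 s0" and s0_norm: "l2sq_r h s0 \<le> Ms0\<^sup>2"
    and c0_range: "\<forall>k. cm \<le> c0 k \<and> c0 k \<le> C0"
    and Dc0_l2: "in_l2 (Dp h c0)" and Dc0_norm: "l2sq_r h (Dp h c0) \<le> Mc0\<^sup>2"
    and solution: "NS_solution h T lam B \<psi> s0 c0 s c"
begin

lemma s_cont: "continuous_on {0..T} (\<lambda>t. s t k)"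
  and c_cont: "continuous_on {0..T} (\<lambda>t. c t k)"
  and s_initial: "1 \<le> k \<Longrightarrow> s 0 k = s0 k"
  and c_initial: "1 \<le> k \<Longrightarrow> c 0 k = c0 k"
  and s_boundary: "t \<in> {0..T} \<Longrightarrow> s t 0 = \<psi> t"
  and c_boundary: "t \<in> {0..T} \<Longrightarrow> c t 0 = c0 0 / (phi B (c0 0) * exp (lam * integral {0..t} \<psi>) - B * c0 0)"
  using solution unfolding NS_solution_def by auto

lemma at_within_interval_interior: "0 < t \<Longrightarrow> t < T \<Longrightarrow> at t within {0..T} = at t"
  by (rule at_within_interior) simp

lemma s_deriv:
  assumes "1 \<le> k" "0 < t" "t < T"
  shows "((\<lambda>\<tau>. s \<tau> k) has_real_derivative
     Lap h (s t) k + B / (2 * phi B (c t k)) * (Dp h (c t) k * Dp h (s t) k + Dm h (c t) k * Dm h (s t) k)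
     + lam * c t k * B * (s t k)\<^sup>2 - lam * c t k * s t k) (at t)"
proof -
  have "\<forall>k\<ge>1. \<forall>t\<in>{0<..T}. ((\<lambda>\<tau>. s \<tau> k) has_real_derivative
     Lap h (s t) k + B / (2 * phi B (c t k)) * (Dp h (c t) k * Dp h (s t) k + Dm h (c t) k * Dm h (s t) k)
     + lam * c t k * B * (s t k)\<^sup>2 - lam * c t k * s t k) (at t within {0..T})"
    using solution unfolding NS_solution_def by blast
  from this[rule_format, of k t] assms show ?thesis by (simp add: at_within_interval_interior)
qed

lemma c_deriv:
  assumes "1 \<le> k" "0 < t" "t < T"
  shows "((\<lambda>\<tau>. c \<tau> k) has_real_derivative - lam * phi B (c t k) * s t k * c t k) (at t)"
proof -
  have "\<forall>k\<ge>1. \<forall>t\<in>{0<..T}.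
      ((\<lambda>\<tau>. c \<tau> k) has_real_derivative - lam * phi B (c t k) * s t k * c t k) (at t within {0..T})"
    using solution unfolding NS_solution_def by blast
  from this[rule_format, of k t] assms show ?thesis by (simp add: at_within_interval_interior)
qed

lemma C0_pos: "0 < C0"
  using cm by simp

lemma C0_lt_1: "B = -1 \<Longrightarrow> C0 < 1"
  using phi_range[rule_format, of C0] cm phi_min unfolding phi_def by simp

lemma c0_pos: "0 < c0 k"
  using c0_range cm by (auto intro: less_le_trans)

lemma phi_c0: "\<phi>min \<le> phi B (c0 k) \<and> phi B (c0 k) \<le> \<phi>max"
  using phi_range c0_range c0_pos[of k] by (simp add: less_imp_le)

lemma phi_min_le_max: "\<phi>min \<le> \<phi>max"
  using phi_c0[of 0] by simp

lemma phi_cont: "continuous_on {0..T} (\<lambda>t. phi B (c t k))"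
  unfolding phi_def by (intro continuous_intros c_cont)

text \<open>The solution class only provides some bound on \<open>\<parallel>s(t)\<parallel>\<close> and \<open>\<bar>c\<bar>\<close>; the resulting
  \<open>h\<close>-dependent constants serve only to run the maximum principle.\<close>

definition s_norm_crude :: real where
  "s_norm_crude = (SOME M. \<forall>t\<in>{0..T}. in_l2 (s t) \<and> l2sq_r h (s t) \<le> M)"

definition c_bound_crude :: real where
  "c_bound_crude = (SOME M. \<forall>t\<in>{0..T}. \<forall>k. \<bar>c t k\<bar> \<le> M)"

definition s_bound_crude :: real where
  "s_bound_crude = sqrt (\<bar>s_norm_crude\<bar> / h) + \<eta>"

lemma s_l2_crude: "t \<in> {0..T} \<Longrightarrow> in_l2 (s t) \<and> l2sq_r h (s t) \<le> s_norm_crude"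
proof -
  have "\<exists>M. \<forall>t\<in>{0..T}. in_l2 (s t) \<and> l2sq_r h (s t) \<le> M"
    using solution unfolding NS_solution_def by blast
  from someI_ex[OF this] show "t \<in> {0..T} \<Longrightarrow> ?thesis" unfolding s_norm_crude_def by blast
qed

lemma c_abs_le_crude: "t \<in> {0..T} \<Longrightarrow> \<bar>c t k\<bar> \<le> c_bound_crude"
proof -
  have "\<exists>M. \<forall>t\<in>{0..T}. \<forall>k. \<bar>c t k\<bar> \<le> M"
    using solution unfolding NS_solution_def by blast
  from someI_ex[OF this] show "t \<in> {0..T} \<Longrightarrow> ?thesis" unfolding c_bound_crude_def by blast
qed

lemma c_bound_crude_nonneg: "0 \<le> c_bound_crude"
  using c_abs_le_crude[of 0 0] T by auto

lemma s_bound_crude_nonneg: "0 \<le> s_bound_crude"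
  unfolding s_bound_crude_def using eta h by simp

lemma s_partial_sum_le_crude: "t \<in> {0..T} \<Longrightarrow> (\<Sum>j<N. (s t (Suc j))\<^sup>2) \<le> \<bar>s_norm_crude\<bar> / h"
proof -
  assume t: "t \<in> {0..T}"
  have "(\<Sum>j<N. (s t (Suc j))\<^sup>2) \<le> (\<Sum>j. (s t (Suc j))\<^sup>2)"
    using s_l2_crude[OF t] unfolding in_l2_def by (intro sum_le_suminf) auto
  also have "\<dots> \<le> \<bar>s_norm_crude\<bar> / h"
    using s_l2_crude[OF t] h abs_ge_self[of s_norm_crude] unfolding l2sq_r_def
    by (simp add: pos_le_divide_eq mult.commute)
  finally show ?thesis .
qed

lemma s_abs_le_crude: "t \<in> {0..T} \<Longrightarrow> \<bar>s t k\<bar> \<le> s_bound_crude"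
proof (cases k)
  case 0
  assume t: "t \<in> {0..T}"
  have sqrt_nonneg: "0 \<le> sqrt (\<bar>s_norm_crude\<bar> / h)" using h by simp
  have "0 \<le> \<psi> t" "\<psi> t \<le> \<eta>" using psi_range t by auto
  moreover have "\<bar>s t k\<bar> = \<psi> t" using 0 s_boundary[OF t] \<open>0 \<le> \<psi> t\<close> by simp
  ultimately show ?thesis using sqrt_nonneg unfolding s_bound_crude_def by linarith
next
  case (Suc j)
  assume t: "t \<in> {0..T}"
  have "(s t k)\<^sup>2 \<le> (\<Sum>i<Suc j. (s t (Suc i))\<^sup>2)" using Suc by (simp add: sum_nonneg)
  also have "\<dots> \<le> \<bar>s_norm_crude\<bar> / h" by (rule s_partial_sum_le_crude[OF t])
  finally have "\<bar>s t k\<bar> \<le> sqrt (\<bar>s_norm_crude\<bar> / h)" using real_le_rsqrt[of "\<bar>s t k\<bar>"] by simp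
  then show ?thesis unfolding s_bound_crude_def using eta by simp
qed

lemma s_tail: "(\<lambda>N. integral {0..T} (\<lambda>t. (s t N)\<^sup>2)) \<longlonglongrightarrow> 0"
proof -
  have int: "(\<lambda>t. (s t N)\<^sup>2) integrable_on {0..T}" for N
    by (intro integrable_continuous_real continuous_intros s_cont)
  have "summable (\<lambda>N. integral {0..T} (\<lambda>t. (s t (Suc N))\<^sup>2))"
  proof (rule summableI_nonneg_bounded)
    show "0 \<le> integral {0..T} (\<lambda>t. (s t (Suc N))\<^sup>2)" for N
      by (rule integral_nonneg[OF int]) auto
    fix K
    have "(\<Sum>N<K. integral {0..T} (\<lambda>t. (s t (Suc N))\<^sup>2)) = integral {0..T} (\<lambda>t. \<Sum>N<K. (s t (Suc N))\<^sup>2)"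
      by (rule integral_sum[symmetric]) (auto intro: int)
    also have "\<dots> \<le> integral {0..T} (\<lambda>t. \<bar>s_norm_crude\<bar> / h)"
      by (rule integral_le) (auto intro!: integrable_sum int s_partial_sum_le_crude)
    finally show "(\<Sum>N<K. integral {0..T} (\<lambda>t. (s t (Suc N))\<^sup>2)) \<le> T * (\<bar>s_norm_crude\<bar> / h)"
      using T by simp
  qed
  then show ?thesis by (rule LIMSEQ_imp_Suc[OF summable_LIMSEQ_zero])
qed

lemma tail_vanishes_if_dominated:
  assumes "\<And>N. continuous_on {0..T} (\<lambda>t. f t N)"
    and "\<And>t N. t \<in> {0..T} \<Longrightarrow> 0 \<le> f t N \<and> f t N \<le> (s t N)\<^sup>2"
  shows "(\<lambda>N. integral {0..T} (\<lambda>t. f t N)) \<longlonglongrightarrow> 0"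
proof (rule tendsto_sandwich[OF _ _ tendsto_const s_tail])
  have i: "(\<lambda>t. f t N) integrable_on {0..T}" for N by (rule integrable_continuous_real[OF assms(1)])
  have i2: "(\<lambda>t. (s t N)\<^sup>2) integrable_on {0..T}" for N
    by (intro integrable_continuous_real continuous_intros s_cont)
  show "\<forall>\<^sub>F N in sequentially. 0 \<le> integral {0..T} (\<lambda>t. f t N)"
    using assms(2) by (intro always_eventually allI integral_nonneg[OF i]) auto
  show "\<forall>\<^sub>F N in sequentially. integral {0..T} (\<lambda>t. f t N) \<le> integral {0..T} (\<lambda>t. (s t N)\<^sup>2)"
    using assms(2) by (intro always_eventually allI integral_le[OF i i2]) auto
qed

lemma c_exp_formula:
  assumes k: "1 \<le> k" and t: "t \<in> {0..T}"
  shows "c t k = c0 k * exp (integral {0..t} (\<lambda>\<tau>. - lam * phi B (c \<tau> k) * s \<tau> k))"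
proof -
  have "c t k = c 0 k * exp (integral {0..t} (\<lambda>\<tau>. - lam * phi B (c \<tau> k) * s \<tau> k))"
  proof (rule linear_ode_solution[OF c_cont _ _ t])
    show "continuous_on {0..T} (\<lambda>\<tau>. - lam * phi B (c \<tau> k) * s \<tau> k)"
      by (intro continuous_intros phi_cont s_cont)
    show "((\<lambda>t. c t k) has_real_derivative - lam * phi B (c x k) * s x k * c x k) (at x)"
      if "0 < x" "x < T" for x
      by (rule c_deriv[OF k that])
  qed
  with c_initial[OF k] show ?thesis by simp
qed

lemma c_boundary_range: "t \<in> {0..T} \<Longrightarrow> 0 < c t 0 \<and> c t 0 \<le> c0 0"
proof -
  assume t: "t \<in> {0..T}"
  have "0 \<le> integral {0..t} \<psi>"
    by (rule integral_nonneg, rule integrable_continuous_real, rule continuous_on_subset[OF psi_cont])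
      (use t psi_range in auto)
  then have "1 \<le> exp (lam * integral {0..t} \<psi>)" using lam by simp
  with phi_c0[of 0] phi_min have "1 \<le> phi B (c0 0) * exp (lam * integral {0..t} \<psi>) - B * c0 0"
    unfolding phi_def using mult_left_mono[of 1 "exp (lam * integral {0..t} \<psi>)" "1 + B * c0 0"]
    by (simp add: algebra_simps)
  with c0_pos[of 0] show ?thesis
    unfolding c_boundary[OF t] by (simp add: divide_le_eq)
qed

lemma c_pos: "t \<in> {0..T} \<Longrightarrow> 0 < c t k"
  using c_boundary_range c_exp_formula c0_pos by (cases "k = 0") auto

lemma one_minus_c_exp_formula: "B = -1 \<Longrightarrow> 1 \<le> k \<Longrightarrow> t \<in> {0..T} \<Longrightarrow>
  1 - c t k = (1 - c0 k) * exp (integral {0..t} (\<lambda>\<tau>. lam * s \<tau> k * c \<tau> k))"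
proof -
  assume B': "B = -1" and k: "1 \<le> k" and t: "t \<in> {0..T}"
  have "1 - c t k = (1 - c 0 k) * exp (integral {0..t} (\<lambda>\<tau>. lam * s \<tau> k * c \<tau> k))"
  proof (rule linear_ode_solution[OF _ _ _ t])
    show "continuous_on {0..T} (\<lambda>t. 1 - c t k)" "continuous_on {0..T} (\<lambda>\<tau>. lam * s \<tau> k * c \<tau> k)"
      by (intro continuous_intros c_cont s_cont)+
    fix x assume "0 < x" "x < T"
    from DERIV_diff[OF DERIV_const c_deriv[OF k this]]
    show "((\<lambda>t. 1 - c t k) has_real_derivative lam * s x k * c x k * (1 - c x k)) (at x)"
      using B' by (simp add: phi_def algebra_simps)
  qed
  then show ?thesis using c_initial[OF k] by simp
qed

definition phi_floor :: real where
  "phi_floor = (if B = 1 then 1 else (1 - C0) * exp (- (lam * s_bound_crude * c_bound_crude * T)))"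

lemma phi_floor_pos: "0 < phi_floor"
  unfolding phi_floor_def using C0_lt_1 B by auto

lemma phi_ge_floor: "t \<in> {0..T} \<Longrightarrow> phi_floor \<le> phi B (c t k)"
proof (cases "B = 1")
  case True
  assume "t \<in> {0..T}"
  then show ?thesis using True c_pos[of t k] unfolding phi_floor_def phi_def by simp
next
  case False
  assume t: "t \<in> {0..T}"
  from False B have B': "B = -1" by simp
  have e1: "exp (- (lam * s_bound_crude * c_bound_crude * T)) \<le> 1"
    using lam s_bound_crude_nonneg c_bound_crude_nonneg T by simp
  have C0: "0 \<le> 1 - C0" using C0_lt_1[OF B'] by simp
  show ?thesis
  proof (cases "k = 0")
    case True
    have "c t 0 \<le> C0" using c_boundary_range[OF t] c0_range by (meson order_trans)
    with True B' C0 e1 show ?thesis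
      unfolding phi_floor_def phi_def using mult_left_mono[OF e1 C0] by simp
  next
    case False
    have "- (lam * s_bound_crude * c_bound_crude) * T \<le> integral {0..t} (\<lambda>\<tau>. lam * s \<tau> k * c \<tau> k)"
    proof (rule integral_ge_neg_bound[OF _ _ t])
      show "continuous_on {0..T} (\<lambda>\<tau>. lam * s \<tau> k * c \<tau> k)" by (intro continuous_intros c_cont s_cont)
      fix x assume x: "x \<in> {0..T}"
      have "\<bar>lam * s x k * c x k\<bar> = lam * \<bar>s x k\<bar> * \<bar>c x k\<bar>" using lam by (simp add: abs_mult)
      also have "\<dots> \<le> lam * s_bound_crude * c_bound_crude"
        using s_abs_le_crude[OF x, of k] c_abs_le_crude[OF x, of k] lam s_bound_crude_nonneg
        by (intro mult_mono mult_left_mono) auto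
      finally show "\<bar>lam * s x k * c x k\<bar> \<le> lam * s_bound_crude * c_bound_crude" .
    qed
    moreover have "1 - C0 \<le> 1 - c0 k" using c0_range by simp
    ultimately have "(1 - C0) * exp (- (lam * s_bound_crude * c_bound_crude * T))
        \<le> (1 - c0 k) * exp (integral {0..t} (\<lambda>\<tau>. lam * s \<tau> k * c \<tau> k))"
      using C0 by (intro mult_mono) auto
    with False show ?thesis
      using one_minus_c_exp_formula[OF B' _ t, of k] B' unfolding phi_floor_def phi_def by simp
  qed
qed

lemma phi_pos: "t \<in> {0..T} \<Longrightarrow> 0 < phi B (c t k)"
  using phi_ge_floor[of t k] phi_floor_pos by simp

lemma phi_le_crude: "t \<in> {0..T} \<Longrightarrow> phi B (c t k) \<le> 1 + c_bound_crude"
  using B c_abs_le_crude[of t k] unfolding phi_def by auto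

text \<open>Since \<open>1 + B (c\<^sub>k\<^sub>\<plusminus>\<^sub>1 - c\<^sub>k) / (2 \<phi>(c\<^sub>k)) = (\<phi>(c\<^sub>k) + \<phi>(c\<^sub>k\<^sub>\<plusminus>\<^sub>1)) / (2 \<phi>(c\<^sub>k))\<close>, the
  transport term of (NS) merges with the discrete Laplacian.\<close>

definition coef_fwd :: "real \<Rightarrow> nat \<Rightarrow> real" where
  "coef_fwd t k = (phi B (c t k) + phi B (c t (Suc k))) / (2 * phi B (c t k))"

definition coef_bwd :: "real \<Rightarrow> nat \<Rightarrow> real" where
  "coef_bwd t k = (phi B (c t k) + phi B (c t (k - 1))) / (2 * phi B (c t k))"

definition reaction :: "real \<Rightarrow> nat \<Rightarrow> real" where
  "reaction t k = lam * c t k * B * (s t k)\<^sup>2 - lam * c t k * s t k"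

lemma s_deriv_weighted: "1 \<le> k \<Longrightarrow> 0 < t \<Longrightarrow> t < T \<Longrightarrow>
  ((\<lambda>\<tau>. s \<tau> k) has_real_derivative
     (coef_fwd t k * (s t (Suc k) - s t k) + coef_bwd t k * (s t (k - 1) - s t k)) / h\<^sup>2 + reaction t k) (at t)"
proof -
  assume k: "1 \<le> k" and t: "0 < t" "t < T"
  then have p: "phi B (c t k) \<noteq> 0" using phi_pos[of t k] by simp
  define X where "X = B / (2 * phi B (c t k))"
  have coef: "coef_fwd t k = 1 + X * (c t (Suc k) - c t k)" "coef_bwd t k = 1 + X * (c t (k - 1) - c t k)"
    unfolding coef_fwd_def coef_bwd_def X_def using p by (simp_all add: phi_def field_simps)
  have lap: "Lap h (s t) k = ((s t (Suc k) - s t k) + (s t (k - 1) - s t k)) / h\<^sup>2"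
    and drift: "Dp h (c t) k * Dp h (s t) k + Dm h (c t) k * Dm h (s t) k
      = ((c t (Suc k) - c t k) * (s t (Suc k) - s t k) + (c t k - c t (k - 1)) * (s t k - s t (k - 1))) / h\<^sup>2"
    unfolding Lap_def Dp_def Dm_def using h by (simp_all add: field_simps power2_eq_square)
  have "Lap h (s t) k + X * (Dp h (c t) k * Dp h (s t) k + Dm h (c t) k * Dm h (s t) k)
      + lam * c t k * B * (s t k)\<^sup>2 - lam * c t k * s t k
    = (coef_fwd t k * (s t (Suc k) - s t k) + coef_bwd t k * (s t (k - 1) - s t k)) / h\<^sup>2 + reaction t k"
    unfolding lap drift coef reaction_def using h by (simp add: field_simps)
  with s_deriv[OF k t] show ?thesis unfolding X_def by simp
qed

lemma coef_fwd_eq: "t \<in> {0..T} \<Longrightarrow> coef_fwd t k = 1/2 + phi B (c t (Suc k)) / (2 * phi B (c t k))"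
  unfolding coef_fwd_def using phi_pos[of t k] by (simp add: field_simps)

lemma coef_bwd_eq: "t \<in> {0..T} \<Longrightarrow> coef_bwd t k = 1/2 + phi B (c t (k - 1)) / (2 * phi B (c t k))"
  unfolding coef_bwd_def using phi_pos[of t k] by (simp add: field_simps)

lemma phi_ratio_le:
  assumes "t \<in> {0..T}" "0 < lo" "\<And>j. lo \<le> phi B (c t j)" "\<And>j. phi B (c t j) \<le> hi"
  shows "0 \<le> phi B (c t j) / (2 * phi B (c t k)) \<and> phi B (c t j) / (2 * phi B (c t k)) \<le> hi / (2 * lo)"
proof -
  have "phi B (c t j) / (2 * phi B (c t k)) \<le> hi / (2 * phi B (c t k))"
    using assms phi_pos[OF assms(1), of k] by (intro divide_right_mono) auto
  also have "\<dots> \<le> hi / (2 * lo)"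
    using assms(2) assms(3)[of k] assms(4)[of k] phi_pos[OF assms(1), of k]
    by (intro divide_left_mono) auto
  finally show ?thesis using phi_pos[OF assms(1)] by (simp add: less_imp_le)
qed

definition coef_bound_crude :: real where
  "coef_bound_crude = 1/2 + (1 + c_bound_crude) / (2 * phi_floor)"

lemma coef_bounds_crude: "t \<in> {0..T} \<Longrightarrow>
  1/2 \<le> coef_fwd t k \<and> coef_fwd t k \<le> coef_bound_crude \<and> 1/2 \<le> coef_bwd t k \<and> coef_bwd t k \<le> coef_bound_crude"
  unfolding coef_fwd_eq coef_bwd_eq coef_bound_crude_def
  using phi_ratio_le[OF _ phi_floor_pos phi_ge_floor phi_le_crude] by fastforce

definition reaction_lip_crude :: real where
  "reaction_lip_crude = lam * c_bound_crude * (s_bound_crude + 1)"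

lemma reaction_le_above: "t \<in> {0..T} \<Longrightarrow> \<eta> < s t k \<Longrightarrow> reaction t k \<le> reaction_lip_crude * (s t k - \<eta>)"
proof -
  assume t: "t \<in> {0..T}" and sk: "\<eta> < s t k"
  have c: "0 < c t k" "c t k \<le> c_bound_crude" using c_pos[OF t] c_abs_le_crude[OF t, of k] by auto
  have sS: "s t k \<le> s_bound_crude" using s_abs_le_crude[OF t, of k] by simp
  show ?thesis
  proof (cases "B = 1")
    case True
    with eta_lt_1 have "\<eta> < 1" by simp
    then have "\<eta> * (\<eta> - 1) \<le> 0" using eta by (intro mult_nonneg_nonpos) auto
    then have "s t k * (s t k - 1) \<le> (s t k - \<eta>) * (s t k + \<eta> - 1)" by (simp add: algebra_simps)
    also have "\<dots> \<le> (s t k - \<eta>) * (s_bound_crude + 1)"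
      using sk sS \<open>\<eta> < 1\<close> by (intro mult_left_mono) auto
    finally have step: "s t k * (s t k - 1) \<le> (s t k - \<eta>) * (s_bound_crude + 1)" .
    have "reaction t k = lam * c t k * (s t k * (s t k - 1))"
      using True unfolding reaction_def by (simp add: power2_eq_square algebra_simps)
    also have "\<dots> \<le> lam * c t k * ((s t k - \<eta>) * (s_bound_crude + 1))"
      using lam c step by (intro mult_left_mono) auto
    also have "\<dots> \<le> lam * c_bound_crude * ((s t k - \<eta>) * (s_bound_crude + 1))"
      using lam c sk s_bound_crude_nonneg by (intro mult_right_mono mult_left_mono) auto
    finally show ?thesis unfolding reaction_lip_crude_def by (simp add: algebra_simps)
  next
    case False
    with B have "reaction t k = - (lam * c t k * (s t k * (s t k + 1)))"
      unfolding reaction_def by (simp add: power2_eq_square algebra_simps)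
    also have "\<dots> \<le> 0" using lam c sk eta by simp
    also have "0 \<le> reaction_lip_crude * (s t k - \<eta>)"
      unfolding reaction_lip_crude_def using lam c_bound_crude_nonneg s_bound_crude_nonneg sk by simp
    finally show ?thesis .
  qed
qed

lemma reaction_ge_below: "t \<in> {0..T} \<Longrightarrow> s t k < 0 \<Longrightarrow> - reaction t k \<le> reaction_lip_crude * (- s t k)"
proof -
  assume t: "t \<in> {0..T}" and sk: "s t k < 0"
  have c: "0 < c t k" "c t k \<le> c_bound_crude" using c_pos[OF t] c_abs_le_crude[OF t, of k] by auto
  have sS: "- s t k \<le> s_bound_crude" using s_abs_le_crude[OF t, of k] by simp
  have L: "0 \<le> reaction_lip_crude * (- s t k)"
    unfolding reaction_lip_crude_def using lam c_bound_crude_nonneg s_bound_crude_nonneg sk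
    by (intro mult_nonneg_nonneg) auto
  show ?thesis
  proof (cases "B = 1")
    case True
    then have "- reaction t k = - (lam * c t k * ((- s t k) * (1 - s t k)))"
      unfolding reaction_def by (simp add: power2_eq_square algebra_simps)
    also have "\<dots> \<le> 0" using lam c sk by (simp only: neg_le_0_iff_le, intro mult_nonneg_nonneg) auto
    finally show ?thesis using L by linarith
  next
    case False
    with B have "- reaction t k = lam * c t k * ((- s t k) * (- s t k - 1))"
      unfolding reaction_def by (simp add: power2_eq_square algebra_simps)
    also have "\<dots> \<le> lam * c t k * ((- s t k) * (s_bound_crude + 1))"
      using lam c sk sS by (intro mult_left_mono) auto
    also have "\<dots> \<le> lam * c_bound_crude * ((- s t k) * (s_bound_crude + 1))"
      using lam c sk s_bound_crude_nonneg
      by (intro mult_right_mono mult_left_mono mult_nonneg_nonneg) auto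
    finally show ?thesis unfolding reaction_lip_crude_def by (simp add: algebra_simps)
  qed
qed

lemma s_le_eta: "t \<in> {0..T} \<Longrightarrow> s t k \<le> \<eta>"
proof -
  assume t: "t \<in> {0..T}"
  have "s t k - \<eta> \<le> 0"
  proof (rule discrete_max_principle[OF h _ _ _ _ _ _ _ _ _ t,
        where a=coef_fwd and d=coef_bwd and r=reaction and A=coef_bound_crude and L=reaction_lip_crude])
    show "0 \<le> coef_bound_crude" "0 \<le> reaction_lip_crude"
      using coef_bounds_crude[of 0 0] T s_bound_crude_nonneg c_bound_crude_nonneg lam
      unfolding reaction_lip_crude_def by auto
    show "continuous_on {0..T} (\<lambda>t. s t k - \<eta>)" for k by (intro continuous_intros s_cont)
    show "((\<lambda>\<tau>. s \<tau> k - \<eta>) has_real_derivative (coef_fwd t k * (s t (Suc k) - \<eta> - (s t k - \<eta>))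
        + coef_bwd t k * (s t (k - 1) - \<eta> - (s t k - \<eta>))) / h\<^sup>2 + reaction t k) (at t)"
      if "1 \<le> k" "0 < t" "t < T" for k t
      using DERIV_diff[OF s_deriv_weighted[OF that] DERIV_const[of \<eta>]] by simp
    show "0 \<le> coef_fwd t k \<and> coef_fwd t k \<le> coef_bound_crude \<and> 0 \<le> coef_bwd t k \<and> coef_bwd t k \<le> coef_bound_crude"
      if "1 \<le> k" "0 < t" "t < T" for k t
      using coef_bounds_crude[of t k] that by auto
    show "reaction t k \<le> reaction_lip_crude * (s t k - \<eta>)" if "1 \<le> k" "0 < t" "t < T" "0 < s t k - \<eta>" for k t
      using reaction_le_above[of t k] that by auto
    show "s t 0 - \<eta> \<le> 0" if "t \<in> {0..T}" for t using s_boundary[OF that] psi_range that by auto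
    show "s 0 k - \<eta> \<le> 0" if "1 \<le> k" for k using s_initial[OF that] s0_range by auto
    show "(\<lambda>N. integral {0..T} (\<lambda>t. (max 0 (s t N - \<eta>))\<^sup>2)) \<longlonglongrightarrow> 0"
    proof (rule tail_vanishes_if_dominated)
      show "continuous_on {0..T} (\<lambda>t. (max 0 (s t N - \<eta>))\<^sup>2)" for N
        by (intro continuous_intros s_cont)
      show "0 \<le> (max 0 (s t N - \<eta>))\<^sup>2 \<and> (max 0 (s t N - \<eta>))\<^sup>2 \<le> (s t N)\<^sup>2" for t N
        using eta by (auto simp: max_def intro!: power_mono)
    qed
  qed
  then show ?thesis by simp
qed

lemma s_nonneg: "t \<in> {0..T} \<Longrightarrow> 0 \<le> s t k"
proof -
  assume t: "t \<in> {0..T}"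
  have "- s t k \<le> 0"
  proof (rule discrete_max_principle[OF h _ _ _ _ _ _ _ _ _ t,
        where a=coef_fwd and d=coef_bwd and r="\<lambda>t k. - reaction t k" and A=coef_bound_crude
          and L=reaction_lip_crude])
    show "0 \<le> coef_bound_crude" "0 \<le> reaction_lip_crude"
      using coef_bounds_crude[of 0 0] T s_bound_crude_nonneg c_bound_crude_nonneg lam
      unfolding reaction_lip_crude_def by auto
    show "continuous_on {0..T} (\<lambda>t. - s t k)" for k by (intro continuous_intros s_cont)
    show "((\<lambda>\<tau>. - s \<tau> k) has_real_derivative (coef_fwd t k * (- s t (Suc k) - - s t k)
        + coef_bwd t k * (- s t (k - 1) - - s t k)) / h\<^sup>2 + - reaction t k) (at t)"
      if "1 \<le> k" "0 < t" "t < T" for k t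
      using DERIV_minus[OF s_deriv_weighted[OF that]] by (simp add: algebra_simps minus_divide_left)
    show "0 \<le> coef_fwd t k \<and> coef_fwd t k \<le> coef_bound_crude \<and> 0 \<le> coef_bwd t k \<and> coef_bwd t k \<le> coef_bound_crude"
      if "1 \<le> k" "0 < t" "t < T" for k t
      using coef_bounds_crude[of t k] that by auto
    show "- reaction t k \<le> reaction_lip_crude * - s t k" if "1 \<le> k" "0 < t" "t < T" "0 < - s t k" for k t
      using reaction_ge_below[of t k] that by auto
    show "- s t 0 \<le> 0" if "t \<in> {0..T}" for t using s_boundary[OF that] psi_range that by auto
    show "- s 0 k \<le> 0" if "1 \<le> k" for k using s_initial[OF that] s0_range by auto
    show "(\<lambda>N. integral {0..T} (\<lambda>t. (max 0 (- s t N))\<^sup>2)) \<longlonglongrightarrow> 0"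
    proof (rule tail_vanishes_if_dominated)
      show "continuous_on {0..T} (\<lambda>t. (max 0 (- s t N))\<^sup>2)" for N
        by (intro continuous_intros s_cont)
      show "0 \<le> (max 0 (- s t N))\<^sup>2 \<and> (max 0 (- s t N))\<^sup>2 \<le> (s t N)\<^sup>2" for t N
        by (auto simp: max_def)
    qed
  qed
  then show ?thesis by simp
qed

lemma s_range: "t \<in> {0..T} \<Longrightarrow> 0 \<le> s t k \<and> s t k \<le> \<eta>"
  using s_nonneg s_le_eta by auto

lemma c_le_C0: "t \<in> {0..T} \<Longrightarrow> c t k \<le> C0"
proof (cases "k = 0")
  case True
  assume "t \<in> {0..T}"
  with True c_boundary_range c0_range show ?thesis by (meson order_trans)
next
  case False
  assume t: "t \<in> {0..T}"
  have "integral {0..t} (\<lambda>\<tau>. - lam * phi B (c \<tau> k) * s \<tau> k) \<le> integral {0..t} (\<lambda>\<tau>. 0)"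
  proof (rule integral_le)
    show "(\<lambda>\<tau>. - lam * phi B (c \<tau> k) * s \<tau> k) integrable_on {0..t}"
      by (rule integrable_continuous_real, rule continuous_on_subset[of "{0..T}"])
        (use t in \<open>auto intro!: continuous_intros phi_cont s_cont\<close>)
    show "- lam * phi B (c x k) * s x k \<le> 0" if "x \<in> {0..t}" for x
      using that t lam phi_pos[of x k] s_nonneg[of x k] by (simp add: mult_nonneg_nonneg)
  qed (rule integrable_0)
  then have "c0 k * exp (integral {0..t} (\<lambda>\<tau>. - lam * phi B (c \<tau> k) * s \<tau> k)) \<le> c0 k * 1"
    using c0_pos[of k] by (intro mult_left_mono) auto
  with False c0_range show ?thesis using c_exp_formula[OF _ t, of k] by (simp add: order_trans)
qed

lemma phi_bounds: "t \<in> {0..T} \<Longrightarrow> \<phi>min \<le> phi B (c t k) \<and> phi B (c t k) \<le> \<phi>max"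
  using phi_range c_pos[of t k] c_le_C0[of t k] by (simp add: less_imp_le)

section \<open>The energy estimate\<close>

definition coef_bound :: real where
  "coef_bound = 1/2 + \<phi>max / (2 * \<phi>min)"

definition coef_jump_lip :: real where
  "coef_jump_lip = \<phi>max / \<phi>min\<^sup>2"

definition reaction_bound :: real where
  "reaction_bound = lam * C0 * (1 + \<eta>)"

definition c_rhs_lip_c :: real where
  "c_rhs_lip_c = lam * (1 + 2 * C0) * \<eta>"

definition c_rhs_lip_s :: real where
  "c_rhs_lip_s = lam * \<phi>max * C0"

definition c_weight :: real where
  "c_weight = 1 / (8 * c_rhs_lip_s)"

definition pairing_const :: real where
  "pairing_const = 1 / (2 * \<beta> - 1/2)"

definition growth_rate :: real where
  "growth_rate = max (3 * reaction_bound) (9 * coef_jump_lip\<^sup>2 * \<eta>\<^sup>2 / c_weight + 2 * c_rhs_lip_c + c_rhs_lip_s)"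

definition forcing :: real where
  "forcing = (8 * coef_bound\<^sup>2 + 2) * lift_grad_bound + 2 * reaction_bound * \<eta>\<^sup>2 + 4 * M\<psi>\<^sup>2 * pairing_const\<^sup>2"

definition dev :: "real \<Rightarrow> nat \<Rightarrow> real" where
  "dev t k = s t k - lift t k"

definition energy :: "nat \<Rightarrow> real \<Rightarrow> real" where
  "energy n t = h * (\<Sum>k=1..Suc n. (dev t k)\<^sup>2)"

definition c_energy :: "nat \<Rightarrow> real \<Rightarrow> real" where
  "c_energy n t = (1 / h) * (\<Sum>k=1..n. (c t (Suc k) - c t k)\<^sup>2)"

definition dissipation :: "nat \<Rightarrow> real \<Rightarrow> real" where
  "dissipation n t = (1 / h) * ((dev t 1)\<^sup>2 + (\<Sum>k=1..n. (dev t (Suc k) - dev t k)\<^sup>2))"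

definition lift_grad :: "nat \<Rightarrow> real \<Rightarrow> real" where
  "lift_grad n t = (1 / h) * (\<Sum>k=0..n. (lift t (Suc k) - lift t k)\<^sup>2)"

definition flux :: "nat \<Rightarrow> real \<Rightarrow> real" where
  "flux n t = (2 / h) * coef_fwd t (Suc n) * dev t (Suc n) * (s t (Suc (Suc n)) - s t (Suc n))"

definition s_rhs :: "real \<Rightarrow> nat \<Rightarrow> real" where
  "s_rhs t k = (coef_fwd t k * (s t (Suc k) - s t k) + coef_bwd t k * (s t (k - 1) - s t k)) / h\<^sup>2 + reaction t k"

definition c_rhs :: "real \<Rightarrow> nat \<Rightarrow> real" where
  "c_rhs t k = - lam * phi B (c t k) * s t k * c t k"

definition energy_deriv :: "nat \<Rightarrow> real \<Rightarrow> real" where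
  "energy_deriv n t = h * (\<Sum>k=1..Suc n. 2 * dev t k * (s_rhs t k - lift_dt t k))"

definition c_energy_deriv :: "nat \<Rightarrow> real \<Rightarrow> real" where
  "c_energy_deriv n t = (1 / h) * (\<Sum>k=1..n. 2 * (c t (Suc k) - c t k) * (c_rhs t (Suc k) - c_rhs t k))"

lemma c_rhs_lip_s_pos: "0 < c_rhs_lip_s"
  unfolding c_rhs_lip_s_def using lam phi_min phi_min_le_max C0_pos by simp

lemma c_weight_pos: "0 < c_weight"
  unfolding c_weight_def using c_rhs_lip_s_pos by simp

lemma reaction_bound_nonneg: "0 \<le> reaction_bound"
  unfolding reaction_bound_def using lam C0_pos eta by simp

lemma growth_rate_ge: "3 * reaction_bound \<le> growth_rate"
  "9 * coef_jump_lip\<^sup>2 * \<eta>\<^sup>2 + c_weight * (2 * c_rhs_lip_c + c_rhs_lip_s) \<le> c_weight * growth_rate"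
proof -
  show "3 * reaction_bound \<le> growth_rate" unfolding growth_rate_def by simp
  have "c_weight * (9 * coef_jump_lip\<^sup>2 * \<eta>\<^sup>2 / c_weight + 2 * c_rhs_lip_c + c_rhs_lip_s) \<le> c_weight * growth_rate"
    unfolding growth_rate_def using c_weight_pos by (intro mult_left_mono) auto
  moreover have "c_weight * (9 * coef_jump_lip\<^sup>2 * \<eta>\<^sup>2 / c_weight + 2 * c_rhs_lip_c + c_rhs_lip_s)
      = 9 * coef_jump_lip\<^sup>2 * \<eta>\<^sup>2 + c_weight * (2 * c_rhs_lip_c + c_rhs_lip_s)"
    using c_weight_pos by (simp add: field_simps)
  ultimately show "9 * coef_jump_lip\<^sup>2 * \<eta>\<^sup>2 + c_weight * (2 * c_rhs_lip_c + c_rhs_lip_s) \<le> c_weight * growth_rate"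
    by simp
qed

lemma growth_rate_nonneg: "0 \<le> growth_rate"
  using growth_rate_ge(1) reaction_bound_nonneg by linarith

lemma forcing_nonneg: "0 \<le> forcing"
  unfolding forcing_def lift_grad_bound_def using beta reaction_bound_nonneg by simp

lemma dev_0: "t \<in> {0..T} \<Longrightarrow> dev t 0 = 0"
  unfolding dev_def using s_boundary lift_at_0 by simp

lemma dev_abs_le: "t \<in> {0..T} \<Longrightarrow> \<bar>dev t k\<bar> \<le> \<eta>"
  unfolding dev_def using s_range[of t k] lift_range[of t k] by auto

lemma energy_nonneg: "0 \<le> energy n t"
  unfolding energy_def using h by (simp add: sum_nonneg)

lemma c_energy_nonneg: "0 \<le> c_energy n t"
  unfolding c_energy_def using h by (simp add: sum_nonneg)

lemma dissipation_nonneg: "0 \<le> dissipation n t"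
  unfolding dissipation_def using h by (simp add: sum_nonneg add_nonneg_nonneg)

lemma lift_grad_nonneg: "0 \<le> lift_grad n t"
  unfolding lift_grad_def using h by (simp add: sum_nonneg)

lemma lift_grad_le: "t \<in> {0..T} \<Longrightarrow> lift_grad n t \<le> lift_grad_bound"
  unfolding lift_grad_def by (rule lift_diff_sum_le)

lemma coef_bounds: "t \<in> {0..T} \<Longrightarrow>
  1/2 \<le> coef_fwd t k \<and> coef_fwd t k \<le> coef_bound \<and> 1/2 \<le> coef_bwd t k \<and> coef_bwd t k \<le> coef_bound"
proof -
  assume t: "t \<in> {0..T}"
  have "\<And>j. \<phi>min \<le> phi B (c t j)" "\<And>j. phi B (c t j) \<le> \<phi>max" using phi_bounds[OF t] by auto
  from phi_ratio_le[OF t phi_min this] show ?thesis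
    unfolding coef_fwd_eq[OF t] coef_bwd_eq[OF t] coef_bound_def by fastforce
qed

lemma coef_jump_le: "t \<in> {0..T} \<Longrightarrow> \<bar>coef_bwd t (Suc k) - coef_fwd t k\<bar> \<le> coef_jump_lip * \<bar>c t (Suc k) - c t k\<bar>"
proof -
  assume t: "t \<in> {0..T}"
  define P Q where "P = phi B (c t k)" and "Q = phi B (c t (Suc k))"
  have P: "\<phi>min \<le> P" "P \<le> \<phi>max" and Q: "\<phi>min \<le> Q" "Q \<le> \<phi>max"
    using phi_bounds[OF t, of k] phi_bounds[OF t, of "Suc k"] unfolding P_def Q_def by auto
  have bwd: "coef_bwd t (Suc k) = (Q + P) / (2 * Q)" and fwd: "coef_fwd t k = (P + Q) / (2 * P)"
    unfolding coef_bwd_def coef_fwd_def P_def Q_def by simp_all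
  have "coef_bwd t (Suc k) - coef_fwd t k = (P + Q) * (P - Q) / (2 * P * Q)"
    unfolding bwd fwd using P Q phi_min by (simp add: field_simps)
  then have "\<bar>coef_bwd t (Suc k) - coef_fwd t k\<bar> = (P + Q) * \<bar>P - Q\<bar> / (2 * P * Q)"
    using P Q phi_min by (simp add: abs_mult abs_divide)
  also have "\<dots> \<le> (2 * \<phi>max) * \<bar>P - Q\<bar> / (2 * \<phi>min * \<phi>min)"
    using P Q phi_min by (intro frac_le mult_right_mono mult_mono) auto
  also have "\<bar>P - Q\<bar> = \<bar>c t (Suc k) - c t k\<bar>" unfolding P_def Q_def phi_def using B by auto
  finally show ?thesis
    unfolding coef_jump_lip_def using phi_min by (simp add: power2_eq_square field_simps)
qed

lemma diffusion_term_le: "t \<in> {0..T} \<Longrightarrow>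
  (2 / h) * (\<Sum>k=1..Suc n. dev t k * (coef_fwd t k * (s t (Suc k) - s t k) + coef_bwd t k * (s t (k - 1) - s t k)))
  \<le> - (3/4) * dissipation n t + (8 * coef_bound\<^sup>2 + 1) * lift_grad n t
    + 9 * coef_jump_lip\<^sup>2 * \<eta>\<^sup>2 * c_energy n t + flux n t"
proof -
  assume t: "t \<in> {0..T}"
  define SW SG SC where "SW = (dev t 1)\<^sup>2 + (\<Sum>k=1..n. (dev t (Suc k) - dev t k)\<^sup>2)"
    and "SG = (\<Sum>k=0..n. (lift t (Suc k) - lift t k)\<^sup>2)" and "SC = (\<Sum>k=1..n. (c t (Suc k) - c t k)\<^sup>2)"
  define F where "F = coef_fwd t (Suc n) * dev t (Suc n) * (s t (Suc (Suc n)) - s t (Suc n))"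
  have "(\<Sum>k=1..Suc n. dev t k * (coef_fwd t k * (s t (Suc k) - s t k) + coef_bwd t k * (s t (k - 1) - s t k)))
    \<le> - 3/8 * SW + (4 * coef_bound\<^sup>2 + 1/2) * SG + 9/2 * coef_jump_lip\<^sup>2 * \<eta>\<^sup>2 * SC + F"
    unfolding SW_def SG_def SC_def F_def
    by (rule diffusion_energy_le)
      (use coef_bounds[OF t] coef_jump_le[OF t] dev_0[OF t] dev_abs_le[OF t] phi_min phi_min_le_max
        in \<open>auto simp: dev_def coef_jump_lip_def\<close>)
  from mult_left_mono[OF this, of "2 / h"] h
  have "(2 / h) * (\<Sum>k=1..Suc n. dev t k * (coef_fwd t k * (s t (Suc k) - s t k) + coef_bwd t k * (s t (k - 1) - s t k)))
    \<le> (2 / h) * (- 3/8 * SW + (4 * coef_bound\<^sup>2 + 1/2) * SG + 9/2 * coef_jump_lip\<^sup>2 * \<eta>\<^sup>2 * SC + F)"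
    by simp
  also have "\<dots> = - (3/4) * (SW / h) + (8 * coef_bound\<^sup>2 + 1) * (SG / h) + 9 * coef_jump_lip\<^sup>2 * \<eta>\<^sup>2 * (SC / h)
      + 2 / h * F"
    using h by (simp add: field_simps)
  finally show ?thesis
    unfolding dissipation_def lift_grad_def c_energy_def flux_def SW_def[symmetric] SG_def[symmetric]
      SC_def[symmetric] by (simp add: F_def mult.assoc)
qed

lemma reaction_abs_le: "t \<in> {0..T} \<Longrightarrow> \<bar>reaction t k\<bar> \<le> reaction_bound * s t k"
proof -
  assume t: "t \<in> {0..T}"
  have sk: "0 \<le> s t k" "s t k \<le> \<eta>" using s_range[OF t, of k] by auto
  have ck: "0 < c t k" "c t k \<le> C0" using c_pos[OF t, of k] c_le_C0[OF t, of k] by auto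
  have "reaction t k = lam * c t k * s t k * (B * s t k - 1)"
    unfolding reaction_def by (simp add: power2_eq_square algebra_simps)
  then have "\<bar>reaction t k\<bar> = lam * c t k * s t k * \<bar>B * s t k - 1\<bar>"
    using lam ck sk by (simp add: abs_mult)
  also have "\<dots> \<le> lam * C0 * s t k * (1 + \<eta>)"
    using lam ck sk B by (intro mult_mono mult_right_mono mult_left_mono) auto
  finally show ?thesis unfolding reaction_bound_def by (simp add: algebra_simps)
qed

lemma reaction_term_le: "t \<in> {0..T} \<Longrightarrow>
  2 * h * (\<Sum>k=1..Suc n. dev t k * reaction t k) \<le> 3 * reaction_bound * energy n t + 2 * reaction_bound * \<eta>\<^sup>2"
proof -
  assume t: "t \<in> {0..T}"
  have summand: "2 * (dev t k * reaction t k) \<le> reaction_bound * (3 * (dev t k)\<^sup>2 + 2 * (lift t k)\<^sup>2)" for k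
  proof -
    have "2 * (dev t k * reaction t k) \<le> reaction_bound * (2 * (\<bar>dev t k\<bar> * s t k))"
      using mult_left_mono[OF reaction_abs_le[OF t, of k] abs_ge_zero[of "dev t k"]]
        abs_ge_self[of "dev t k * reaction t k"] by (simp add: abs_mult algebra_simps)
    also have "\<dots> \<le> reaction_bound * ((dev t k)\<^sup>2 + (s t k)\<^sup>2)"
      using sum_squares_bound[of "\<bar>dev t k\<bar>" "s t k"] reaction_bound_nonneg
      by (intro mult_left_mono) (auto simp: power2_eq_square)
    also have "\<dots> \<le> reaction_bound * (3 * (dev t k)\<^sup>2 + 2 * (lift t k)\<^sup>2)"
      using square_add_le[of "dev t k" "lift t k"] reaction_bound_nonneg
      by (intro mult_left_mono) (auto simp: dev_def)
    finally show ?thesis .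
  qed
  have "2 * h * (\<Sum>k=1..Suc n. dev t k * reaction t k) = h * (\<Sum>k=1..Suc n. 2 * (dev t k * reaction t k))"
    by (simp add: sum_distrib_left)
  also have "\<dots> \<le> h * (\<Sum>k=1..Suc n. reaction_bound * (3 * (dev t k)\<^sup>2 + 2 * (lift t k)\<^sup>2))"
    using h summand by (intro mult_left_mono sum_mono) auto
  also have "\<dots> = 3 * reaction_bound * energy n t + 2 * reaction_bound * (h * (\<Sum>k=1..Suc n. (lift t k)\<^sup>2))"
    unfolding energy_def by (simp add: sum.distrib sum_distrib_left algebra_simps)
  also have "\<dots> \<le> 3 * reaction_bound * energy n t + 2 * reaction_bound * \<eta>\<^sup>2"
    using lift_l2_bound[OF t, of "Suc n"] reaction_bound_nonneg by (intro add_left_mono mult_left_mono) auto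
  finally show ?thesis .
qed

lemma dev_abs_le_dissipation: "t \<in> {0..T} \<Longrightarrow> k \<le> Suc n \<Longrightarrow>
  \<bar>dev t k\<bar> \<le> sqrt (real k * h) * sqrt (dissipation n t)"
proof -
  assume t: "t \<in> {0..T}" and k: "k \<le> Suc n"
  have "(dev t k)\<^sup>2 \<le> real k * ((dev t 1)\<^sup>2 + (\<Sum>j=1..n. (dev t (Suc j) - dev t j)\<^sup>2))"
    by (rule square_le_mult_sum_square_diffs) (use dev_0[OF t] k in auto)
  also have "\<dots> = real k * h * dissipation n t" unfolding dissipation_def using h by simp
  finally have "\<bar>dev t k\<bar> \<le> sqrt (real k * h * dissipation n t)"
    using real_le_rsqrt[of "\<bar>dev t k\<bar>"] by simp
  then show ?thesis by (simp only: real_sqrt_mult)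
qed

text \<open>Here \<open>\<beta> > 1/4\<close> enters: as \<open>\<bar>dev t k\<bar> \<le> sqrt (k h D)\<close> and
  \<open>\<bar>lift_dt t k\<bar> \<lesssim> (k h) powr (2 \<beta> - 2)\<close>, the pairing is a Riemann sum of the
  integrable \<open>x powr (2 \<beta> - 3/2)\<close>.\<close>

lemma lift_dt_term_le: "t \<in> {0..T} \<Longrightarrow>
  - (h * (\<Sum>k=1..Suc n. 2 * dev t k * lift_dt t k)) \<le> dissipation n t / 4 + 4 * M\<psi>\<^sup>2 * pairing_const\<^sup>2"
proof -
  assume t: "t \<in> {0..T}"
  define D where "D = dissipation n t"
  have D: "0 \<le> D" unfolding D_def by (rule dissipation_nonneg)
  define g where "g = 3/2 - 2 * \<beta>"
  have g: "0 \<le> g" "g < 1" unfolding g_def using beta by auto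
  have summand: "- (2 * dev t k * lift_dt t k) \<le> 2 * sqrt D * M\<psi> * (if real k * h \<le> 1 then (real k * h) powr (- g) else 0)"
    if k: "k \<in> {1..Suc n}" for k
  proof -
    have "\<bar>dev t k\<bar> * \<bar>lift_dt t k\<bar>
        \<le> (sqrt (real k * h) * sqrt D) * (if real k * h \<le> 1 then M\<psi> * (real k * h) powr (- (2 - 2 * \<beta>)) else 0)"
      using dev_abs_le_dissipation[OF t, of k n] lift_dt_bound[of k t] k unfolding D_def
      by (intro mult_mono) auto
    moreover have "- (dev t k * lift_dt t k) \<le> \<bar>dev t k\<bar> * \<bar>lift_dt t k\<bar>"
      by (metis abs_ge_minus_self abs_mult)
    ultimately have "- (2 * dev t k * lift_dt t k)
        \<le> 2 * ((sqrt (real k * h) * sqrt D) * (if real k * h \<le> 1 then M\<psi> * (real k * h) powr (- (2 - 2 * \<beta>)) else 0))"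
      by linarith
    also have "\<dots> = 2 * sqrt D * M\<psi> * (if real k * h \<le> 1 then (real k * h) powr (- g) else 0)"
      using k h by (simp add: g_def powr_half_sqrt[symmetric] algebra_simps flip: powr_add)
    finally show ?thesis .
  qed
  have "- (h * (\<Sum>k=1..Suc n. 2 * dev t k * lift_dt t k)) = h * (\<Sum>k=1..Suc n. - (2 * dev t k * lift_dt t k))"
    by (simp only: sum_negf mult_minus_right)
  also have "\<dots> \<le> h * (\<Sum>k=1..Suc n. 2 * sqrt D * M\<psi> * (if real k * h \<le> 1 then (real k * h) powr (- g) else 0))"
    by (intro mult_left_mono sum_mono summand) (use h in auto)
  also have "\<dots> = 2 * sqrt D * M\<psi> * (h * (\<Sum>k=1..Suc n. (if real k * h \<le> 1 then (real k * h) powr (- g) else 0)))"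
    by (simp add: sum_distrib_left algebra_simps)
  also have "\<dots> \<le> 2 * sqrt D * M\<psi> * pairing_const"
    using riemann_sum_powr_le[OF g h, of "Suc n"] D M_nonneg
    unfolding pairing_const_def g_def by (intro mult_left_mono) (auto simp: algebra_simps)
  also have "\<dots> \<le> 1/4 * (sqrt D)\<^sup>2 + (2 * M\<psi> * pairing_const)\<^sup>2 / (4 * (1/4))"
    using mult_le_weighted_squares[of "1/4" "sqrt D" "2 * M\<psi> * pairing_const"] by (simp add: algebra_simps)
  also have "\<dots> = D / 4 + 4 * M\<psi>\<^sup>2 * pairing_const\<^sup>2" using D by (simp add: power_mult_distrib)
  finally show ?thesis unfolding D_def .
qed

lemma c_rhs_diff_le: "t \<in> {0..T} \<Longrightarrow>
  \<bar>c_rhs t (Suc k) - c_rhs t k\<bar> \<le> c_rhs_lip_c * \<bar>c t (Suc k) - c t k\<bar> + c_rhs_lip_s * \<bar>s t (Suc k) - s t k\<bar>"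
proof -
  assume t: "t \<in> {0..T}"
  define c1 c2 s1 s2 where "c1 = c t k" and "c2 = c t (Suc k)" and "s1 = s t k" and "s2 = s t (Suc k)"
  have c: "0 < c1" "c1 \<le> C0" "0 < c2" "c2 \<le> C0" unfolding c1_def c2_def using c_pos[OF t] c_le_C0[OF t] by auto
  have s: "0 \<le> s2" "s2 \<le> \<eta>" unfolding s2_def using s_range[OF t] by auto
  have p: "\<phi>min \<le> 1 + B * c1" "1 + B * c1 \<le> \<phi>max" using phi_bounds[OF t, of k] unfolding c1_def phi_def by auto
  have "c_rhs t (Suc k) - c_rhs t k = - lam * ((c2 - c1) * (1 + B * (c2 + c1)) * s2 + (1 + B * c1) * c1 * (s2 - s1))"
    unfolding c_rhs_def c1_def c2_def s1_def s2_def phi_def by (simp add: algebra_simps)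
  moreover have "\<bar>(c2 - c1) * (1 + B * (c2 + c1)) * s2\<bar> \<le> \<bar>c2 - c1\<bar> * (1 + 2 * C0) * \<eta>"
    using B c s by (auto simp: abs_mult intro!: mult_mono)
  moreover have "\<bar>(1 + B * c1) * c1 * (s2 - s1)\<bar> \<le> \<phi>max * C0 * \<bar>s2 - s1\<bar>"
    using p c phi_min by (auto simp: abs_mult intro!: mult_mono mult_right_mono)
  ultimately have "\<bar>c_rhs t (Suc k) - c_rhs t k\<bar> \<le> lam * (\<bar>c2 - c1\<bar> * (1 + 2 * C0) * \<eta> + \<phi>max * C0 * \<bar>s2 - s1\<bar>)"
    using lam by (auto simp: abs_mult intro!: mult_left_mono order_trans[OF abs_triangle_ineq])
  then show ?thesis
    unfolding c_rhs_lip_c_def c_rhs_lip_s_def c1_def c2_def s1_def s2_def by (simp add: algebra_simps)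
qed

lemma c_energy_deriv_le: "t \<in> {0..T} \<Longrightarrow>
  c_energy_deriv n t \<le> (2 * c_rhs_lip_c + c_rhs_lip_s) * c_energy n t + 2 * c_rhs_lip_s * dissipation n t
    + 2 * c_rhs_lip_s * lift_grad n t"
proof -
  assume t: "t \<in> {0..T}"
  define dc dw dg where "dc k = c t (Suc k) - c t k" and "dw k = dev t (Suc k) - dev t k"
    and "dg k = lift t (Suc k) - lift t k" for k
  have Lc: "0 \<le> c_rhs_lip_c" unfolding c_rhs_lip_c_def using lam C0_pos eta by simp
  have summand: "2 * dc k * (c_rhs t (Suc k) - c_rhs t k)
      \<le> (2 * c_rhs_lip_c + c_rhs_lip_s) * (dc k)\<^sup>2 + 2 * c_rhs_lip_s * (dw k)\<^sup>2 + 2 * c_rhs_lip_s * (dg k)\<^sup>2" for k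
  proof -
    have ds: "s t (Suc k) - s t k = dw k + dg k" unfolding dw_def dg_def dev_def by simp
    have "2 * dc k * (c_rhs t (Suc k) - c_rhs t k) \<le> 2 * (\<bar>dc k\<bar> * \<bar>c_rhs t (Suc k) - c_rhs t k\<bar>)"
      using abs_ge_self[of "dc k * (c_rhs t (Suc k) - c_rhs t k)"] by (simp add: abs_mult)
    also have "\<dots> \<le> 2 * (\<bar>dc k\<bar> * (c_rhs_lip_c * \<bar>dc k\<bar> + c_rhs_lip_s * \<bar>dw k + dg k\<bar>))"
      using c_rhs_diff_le[OF t, of k] unfolding dc_def ds by (intro mult_left_mono) auto
    also have "\<dots> = 2 * c_rhs_lip_c * (dc k)\<^sup>2 + c_rhs_lip_s * (2 * (\<bar>dc k\<bar> * \<bar>dw k + dg k\<bar>))"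
      by (simp add: power2_eq_square algebra_simps)
    also have "\<dots> \<le> 2 * c_rhs_lip_c * (dc k)\<^sup>2 + c_rhs_lip_s * ((dc k)\<^sup>2 + (dw k + dg k)\<^sup>2)"
      using sum_squares_bound[of "\<bar>dc k\<bar>" "\<bar>dw k + dg k\<bar>"] c_rhs_lip_s_pos
      by (intro add_left_mono mult_left_mono) (auto simp: power2_eq_square)
    also have "\<dots> \<le> 2 * c_rhs_lip_c * (dc k)\<^sup>2 + c_rhs_lip_s * ((dc k)\<^sup>2 + (2 * (dw k)\<^sup>2 + 2 * (dg k)\<^sup>2))"
      using square_add_le[of "dw k" "dg k"] c_rhs_lip_s_pos by (intro add_left_mono mult_left_mono) auto
    finally show ?thesis by (simp add: algebra_simps)
  qed
  have "c_energy_deriv n t \<le> (1 / h) * (\<Sum>k=1..n. (2 * c_rhs_lip_c + c_rhs_lip_s) * (dc k)\<^sup>2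
      + 2 * c_rhs_lip_s * (dw k)\<^sup>2 + 2 * c_rhs_lip_s * (dg k)\<^sup>2)"
    unfolding c_energy_deriv_def dc_def[symmetric] using h summand by (intro mult_left_mono sum_mono) auto
  also have "\<dots> = (2 * c_rhs_lip_c + c_rhs_lip_s) * ((1 / h) * (\<Sum>k=1..n. (dc k)\<^sup>2))
      + 2 * c_rhs_lip_s * ((1 / h) * (\<Sum>k=1..n. (dw k)\<^sup>2)) + 2 * c_rhs_lip_s * ((1 / h) * (\<Sum>k=1..n. (dg k)\<^sup>2))"
    by (simp add: sum.distrib sum_distrib_left algebra_simps)
  also have "\<dots> \<le> (2 * c_rhs_lip_c + c_rhs_lip_s) * c_energy n t + 2 * c_rhs_lip_s * dissipation n t
      + 2 * c_rhs_lip_s * lift_grad n t"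
  proof (intro add_mono mult_left_mono)
    show "(1 / h) * (\<Sum>k=1..n. (dc k)\<^sup>2) \<le> c_energy n t" unfolding c_energy_def dc_def by simp
    show "(1 / h) * (\<Sum>k=1..n. (dw k)\<^sup>2) \<le> dissipation n t"
      unfolding dissipation_def dw_def using h by (intro mult_left_mono) auto
    have "(\<Sum>k=1..n. (dg k)\<^sup>2) \<le> (\<Sum>k=0..n. (dg k)\<^sup>2)" by (intro sum_mono2) auto
    then show "(1 / h) * (\<Sum>k=1..n. (dg k)\<^sup>2) \<le> lift_grad n t"
      unfolding lift_grad_def dg_def using h by (intro mult_left_mono) auto
  qed (use Lc c_rhs_lip_s_pos in auto)
  finally show ?thesis .
qed

lemma energy_deriv_split: "energy_deriv n t =
    (2 / h) * (\<Sum>k=1..Suc n. dev t k * (coef_fwd t k * (s t (Suc k) - s t k) + coef_bwd t k * (s t (k - 1) - s t k)))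
    + 2 * h * (\<Sum>k=1..Suc n. dev t k * reaction t k) - h * (\<Sum>k=1..Suc n. 2 * dev t k * lift_dt t k)"
proof -
  have summand: "h * (2 * dev t k * (s_rhs t k - lift_dt t k))
      = (2 / h) * (dev t k * (coef_fwd t k * (s t (Suc k) - s t k) + coef_bwd t k * (s t (k - 1) - s t k)))
        + 2 * h * (dev t k * reaction t k) - h * (2 * dev t k * lift_dt t k)" for k
    unfolding s_rhs_def using h by (simp add: field_simps power2_eq_square)
  then have "energy_deriv n t = (\<Sum>k=1..Suc n. (2 / h) * (dev t k * (coef_fwd t k * (s t (Suc k) - s t k)
      + coef_bwd t k * (s t (k - 1) - s t k))) + 2 * h * (dev t k * reaction t k) - h * (2 * dev t k * lift_dt t k))"
    unfolding energy_deriv_def sum_distrib_left by (intro sum.cong refl)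
  then show ?thesis by (simp only: sum.distrib sum_subtractf sum_distrib_left[symmetric])
qed

text \<open>The weight \<open>c_weight\<close> of the gradient of \<open>c\<close> is chosen so that its coupling to the
  dissipation of \<open>s\<close> costs at most a quarter of it.\<close>

lemma energy_inequality: "t \<in> {0..T} \<Longrightarrow>
  energy_deriv n t + c_weight * c_energy_deriv n t + dissipation n t / 4
  \<le> growth_rate * (energy n t + c_weight * c_energy n t) + (forcing + \<bar>flux n t\<bar>)"
proof -
  assume t: "t \<in> {0..T}"
  let ?E = "energy n t" and ?G = "c_energy n t" and ?D = "dissipation n t" and ?Gg = "lift_grad n t"
  have c_part: "c_weight * c_energy_deriv n t
      \<le> c_weight * (2 * c_rhs_lip_c + c_rhs_lip_s) * ?G + ?D / 4 + ?Gg / 4"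
    using mult_left_mono[OF c_energy_deriv_le[OF t, of n] less_imp_le[OF c_weight_pos]] c_rhs_lip_s_pos
    unfolding c_weight_def by (simp add: field_simps)
  have "(8 * coef_bound\<^sup>2 + 1 + 1/4) * ?Gg \<le> (8 * coef_bound\<^sup>2 + 2) * lift_grad_bound"
    using lift_grad_nonneg lift_grad_le[OF t] by (intro mult_mono) auto
  moreover have "(9 * coef_jump_lip\<^sup>2 * \<eta>\<^sup>2 + c_weight * (2 * c_rhs_lip_c + c_rhs_lip_s)) * ?G \<le> c_weight * growth_rate * ?G"
    using growth_rate_ge(2) c_energy_nonneg by (intro mult_right_mono) auto
  moreover have "3 * reaction_bound * ?E \<le> growth_rate * ?E"
    using growth_rate_ge(1) energy_nonneg by (intro mult_right_mono) auto
  ultimately show ?thesis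
    using energy_deriv_split[of n t] diffusion_term_le[OF t, of n] reaction_term_le[OF t, of n]
      lift_dt_term_le[OF t, of n] c_part abs_ge_self[of "flux n t"]
    unfolding forcing_def by (simp add: algebra_simps)
qed

lemma dev_has_deriv: "1 \<le> k \<Longrightarrow> 0 < t \<Longrightarrow> t < T \<Longrightarrow>
  ((\<lambda>t. dev t k) has_real_derivative s_rhs t k - lift_dt t k) (at t)"
  unfolding dev_def s_rhs_def by (intro DERIV_diff s_deriv_weighted lift_deriv)

lemma energy_has_deriv: "0 < t \<Longrightarrow> t < T \<Longrightarrow> ((\<lambda>t. energy n t) has_real_derivative energy_deriv n t) (at t)"
proof -
  assume t: "0 < t" "t < T"
  have "((\<lambda>t. (dev t k)\<^sup>2) has_real_derivative 2 * dev t k * (s_rhs t k - lift_dt t k)) (at t)"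
    if "k \<in> {1..Suc n}" for k
    using DERIV_power[OF dev_has_deriv[of k t], of 2] that t by (simp add: algebra_simps)
  then show ?thesis unfolding energy_def energy_deriv_def by (intro DERIV_cmult DERIV_sum)
qed

lemma c_energy_has_deriv: "0 < t \<Longrightarrow> t < T \<Longrightarrow> ((\<lambda>t. c_energy n t) has_real_derivative c_energy_deriv n t) (at t)"
proof -
  assume t: "0 < t" "t < T"
  have "((\<lambda>t. (c t (Suc k) - c t k)\<^sup>2) has_real_derivative
      2 * (c t (Suc k) - c t k) * (c_rhs t (Suc k) - c_rhs t k)) (at t)" if "k \<in> {1..n}" for k
    using DERIV_power[OF DERIV_diff[OF c_deriv[of "Suc k" t] c_deriv[of k t]], of 2] that t
    unfolding c_rhs_def by (simp add: algebra_simps)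
  then show ?thesis unfolding c_energy_def c_energy_deriv_def by (intro DERIV_cmult DERIV_sum)
qed

lemma dev_cont: "continuous_on {0..T} (\<lambda>t. dev t k)"
  unfolding dev_def by (intro continuous_intros s_cont lift_cont)

lemma dissipation_cont: "continuous_on {0..T} (dissipation n)"
  unfolding dissipation_def by (intro continuous_intros dev_cont)

lemma flux_cont: "continuous_on {0..T} (flux n)"
proof -
  have "2 * phi B (c t k) \<noteq> 0" if "t \<in> {0..T}" for t k using phi_pos[OF that, of k] by simp
  then have "continuous_on {0..T} (\<lambda>t. coef_fwd t k)" for k
    unfolding coef_fwd_def by (intro continuous_intros phi_cont) auto
  then show ?thesis unfolding flux_def by (intro continuous_intros dev_cont s_cont)
qed

definition initial_bound :: real where
  "initial_bound = Ms0\<^sup>2 + c_weight * Mc0\<^sup>2 + forcing * T"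

definition flux_integral :: "nat \<Rightarrow> real" where
  "flux_integral n = integral {0..T} (\<lambda>t. \<bar>flux n t\<bar>)"

lemma initial_energy_le: "energy n 0 + c_weight * c_energy n 0 \<le> Ms0\<^sup>2 + c_weight * Mc0\<^sup>2"
proof -
  have "energy n 0 = h * (\<Sum>k=1..Suc n. (s0 k)\<^sup>2)"
    unfolding energy_def dev_def by (intro arg_cong[where f="\<lambda>x. h * x"] sum.cong) (auto simp: s_initial lift_initial)
  also have "\<dots> \<le> Ms0\<^sup>2" using le_l2sq_r_if_in_l2[OF s0_l2 h] s0_norm by (rule order_trans)
  finally have "energy n 0 \<le> Ms0\<^sup>2" .
  moreover have "c_energy n 0 = h * (\<Sum>k=1..n. (Dp h c0 k)\<^sup>2)"
    unfolding c_energy_def Dp_def using h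
    by (simp add: c_initial power_divide sum_divide_distrib[symmetric] power2_eq_square)
  then have "c_energy n 0 \<le> Mc0\<^sup>2" using le_l2sq_r_if_in_l2[OF Dc0_l2 h, of n] Dc0_norm by linarith
  ultimately show ?thesis using c_weight_pos by (simp add: add_mono)
qed

lemma
  shows energy_le: "t \<in> {0..T} \<Longrightarrow> energy n t \<le> exp (growth_rate * T) * (initial_bound + flux_integral n)"
    and dissipation_integral_le:
      "integral {0..T} (dissipation n) \<le> 4 * exp (growth_rate * T) * (initial_bound + flux_integral n)"
proof -
  define Z where "Z t = energy n t + c_weight * c_energy n t" for t
  define F where "F t = forcing + \<bar>flux n t\<bar>" for t
  have Z_cont: "continuous_on {0..T} Z"
    unfolding Z_def energy_def c_energy_def by (intro continuous_intros dev_cont c_cont)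
  have D_cont: "continuous_on {0..T} (\<lambda>t. dissipation n t / 4)"
    by (intro continuous_intros dissipation_cont[unfolded continuous_on_def, THEN bspec]
        continuous_on_divide[OF dissipation_cont continuous_on_const]) simp
  have F_cont: "continuous_on {0..T} F" unfolding F_def by (intro continuous_intros flux_cont)
  have Z_deriv: "(Z has_real_derivative energy_deriv n t + c_weight * c_energy_deriv n t) (at t)"
    if "0 < t" "t < T" for t
    unfolding Z_def by (intro DERIV_add DERIV_cmult energy_has_deriv c_energy_has_deriv that)
  have ineq: "energy_deriv n t + c_weight * c_energy_deriv n t + dissipation n t / 4 \<le> growth_rate * Z t + F t"
    if "0 < t" "t < T" for t
    unfolding Z_def F_def using energy_inequality[of t n] that by simp
  have Z_nonneg: "0 \<le> Z t" for t
    unfolding Z_def using energy_nonneg c_energy_nonneg c_weight_pos by (simp add: add_nonneg_nonneg)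
  have D_nonneg: "0 \<le> dissipation n t / 4" for t using dissipation_nonneg by simp
  have F_nonneg: "0 \<le> F t" for t unfolding F_def using forcing_nonneg by simp
  note gronwall_hyps = less_imp_le[OF T] growth_rate_nonneg Z_cont D_cont F_cont Z_deriv ineq
    F_nonneg Z_nonneg D_nonneg
  have "integral {0..T} F = forcing * T + flux_integral n"
    unfolding F_def flux_integral_def using T
    by (subst integral_add) (auto intro!: integrable_continuous_real continuous_intros flux_cont)
  then have bound: "Z 0 + integral {0..T} F \<le> initial_bound + flux_integral n"
    using initial_energy_le[of n] unfolding Z_def initial_bound_def by simp
  have exp_bound: "exp (growth_rate * T) * (Z 0 + integral {0..T} F)
      \<le> exp (growth_rate * T) * (initial_bound + flux_integral n)"
    using bound by simp
  show "energy n t \<le> exp (growth_rate * T) * (initial_bound + flux_integral n)" if "t \<in> {0..T}"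
  proof -
    have "energy n t \<le> Z t" unfolding Z_def using c_energy_nonneg c_weight_pos by simp
    also have "\<dots> \<le> exp (growth_rate * T) * (Z 0 + integral {0..T} F)"
      by (rule gronwall_sup_bound[OF gronwall_hyps that])
    finally show ?thesis using exp_bound by linarith
  qed
  from gronwall_dissipation_bound[OF gronwall_hyps]
  have "integral {0..T} (dissipation n) / 4 \<le> exp (growth_rate * T) * (Z 0 + integral {0..T} F)"
    by simp
  with exp_bound show "integral {0..T} (dissipation n) \<le> 4 * exp (growth_rate * T) * (initial_bound + flux_integral n)"
    by linarith
qed

lemma flux_abs_le: "1 \<le> real (Suc n) * h \<Longrightarrow> t \<in> {0..T} \<Longrightarrow>
  \<bar>flux n t\<bar> \<le> (3 * coef_bound / h) * ((s t (Suc n))\<^sup>2 + (s t (Suc (Suc n)))\<^sup>2)"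
proof -
  assume N: "1 \<le> real (Suc n) * h" and t: "t \<in> {0..T}"
  define a b where "a = s t (Suc n)" and "b = s t (Suc (Suc n))"
  have "cutoff (Suc n) = 0" using N cutoff_range cutoff_pos_iff by (metis not_less order_le_less)
  then have w: "dev t (Suc n) = a" unfolding dev_def a_def lift_def by simp
  have A: "0 \<le> coef_fwd t (Suc n)" "coef_fwd t (Suc n) \<le> coef_bound" using coef_bounds[OF t, of "Suc n"] by auto
  have ab: "\<bar>a\<bar> * \<bar>b - a\<bar> \<le> 3/2 * a\<^sup>2 + 3/2 * b\<^sup>2"
  proof -
    have "\<bar>a\<bar> * \<bar>b - a\<bar> \<le> \<bar>a\<bar> * \<bar>b\<bar> + a\<^sup>2"
      using mult_left_mono[OF abs_triangle_ineq4[of b a], of "\<bar>a\<bar>"] by (simp add: algebra_simps power2_eq_square)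
    moreover have "2 * (\<bar>a\<bar> * \<bar>b\<bar>) \<le> a\<^sup>2 + b\<^sup>2"
      using sum_squares_bound[of "\<bar>a\<bar>" "\<bar>b\<bar>"] by (simp add: power2_eq_square)
    ultimately show ?thesis using zero_le_power2[of b] by linarith
  qed
  have "\<bar>flux n t\<bar> = (2 / h) * (coef_fwd t (Suc n) * (\<bar>a\<bar> * \<bar>b - a\<bar>))"
    unfolding flux_def w a_def[symmetric] b_def[symmetric] using h A by (simp add: abs_mult)
  also have "\<dots> \<le> (2 / h) * (coef_bound * (3/2 * a\<^sup>2 + 3/2 * b\<^sup>2))"
    using A ab h by (intro mult_left_mono mult_mono) auto
  also have "\<dots> = (3 * coef_bound / h) * (a\<^sup>2 + b\<^sup>2)" using h by (simp add: field_simps)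
  finally show ?thesis unfolding a_def b_def .
qed

lemma flux_integral_tendsto_0: "flux_integral \<longlonglongrightarrow> 0"
proof -
  define I where "I m = integral {0..T} (\<lambda>t. (s t m)\<^sup>2)" for m
  have "(\<lambda>n. 3 * coef_bound / h * (I (Suc n) + I (Suc (Suc n)))) \<longlonglongrightarrow> 3 * coef_bound / h * (0 + 0)"
    unfolding I_def by (intro tendsto_intros LIMSEQ_Suc s_tail)
  then have upper: "(\<lambda>n. 3 * coef_bound / h * (I (Suc n) + I (Suc (Suc n)))) \<longlonglongrightarrow> 0" by simp
  obtain n0 :: nat where n0: "1 \<le> real n0 * h"
    using reals_Archimedean3[OF h] by (metis less_le)
  show ?thesis
  proof (rule tendsto_sandwich[OF _ _ tendsto_const upper])
    show "\<forall>\<^sub>F n in sequentially. 0 \<le> flux_integral n"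
      unfolding flux_integral_def
      by (intro always_eventually allI integral_nonneg integrable_continuous_real continuous_intros flux_cont)
        auto
    show "\<forall>\<^sub>F n in sequentially. flux_integral n \<le> 3 * coef_bound / h * (I (Suc n) + I (Suc (Suc n)))"
    proof (rule eventually_sequentiallyI[of n0])
      fix n assume "n0 \<le> n"
      with n0 h have N: "1 \<le> real (Suc n) * h"
        by (smt (verit) mult_right_mono of_nat_le_iff le_SucI)
      have int: "(\<lambda>t. (s t m)\<^sup>2) integrable_on {0..T}" for m
        by (intro integrable_continuous_real continuous_intros s_cont)
      have "flux_integral n \<le> integral {0..T} (\<lambda>t. 3 * coef_bound / h * ((s t (Suc n))\<^sup>2 + (s t (Suc (Suc n)))\<^sup>2))"
        unfolding flux_integral_def using flux_abs_le[OF N]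
        by (intro integral_le integrable_continuous_real continuous_intros flux_cont s_cont) auto
      also have "\<dots> = 3 * coef_bound / h * (I (Suc n) + I (Suc (Suc n)))"
        unfolding I_def using int by (simp add: integral_add)
      finally show "flux_integral n \<le> 3 * coef_bound / h * (I (Suc n) + I (Suc (Suc n)))" .
    qed
  qed
qed

section \<open>Removing the truncation\<close>

definition sup_bound :: real where
  "sup_bound = 2 * exp (growth_rate * T) * initial_bound + 2 * \<eta>\<^sup>2"

definition grad_bound :: real where
  "grad_bound = 8 * exp (growth_rate * T) * initial_bound + 2 * lift_grad_bound * T"

lemma initial_bound_nonneg: "0 \<le> initial_bound"
  unfolding initial_bound_def using c_weight_pos forcing_nonneg T by simp

lemma s_partial_l2_le: "t \<in> {0..T} \<Longrightarrow> h * (\<Sum>k=1..N. (s t k)\<^sup>2) \<le> sup_bound"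
proof -
  assume t: "t \<in> {0..T}"
  have "h * (\<Sum>k=1..N. (s t k)\<^sup>2) \<le> sup_bound + 2 * exp (growth_rate * T) * flux_integral n"
    if n: "N \<le> n" for n
  proof -
    have "h * (\<Sum>k=1..N. (s t k)\<^sup>2) \<le> h * (\<Sum>k=1..Suc n. (s t k)\<^sup>2)"
      using h n by (intro mult_left_mono sum_mono2) auto
    also have "\<dots> \<le> h * (\<Sum>k=1..Suc n. 2 * (dev t k)\<^sup>2 + 2 * (lift t k)\<^sup>2)"
      using h square_add_le[of "dev t k" "lift t k" for k] by (intro mult_left_mono sum_mono) (auto simp: dev_def)
    also have "\<dots> = 2 * energy n t + 2 * (h * (\<Sum>k=1..Suc n. (lift t k)\<^sup>2))"
      unfolding energy_def by (simp add: sum.distrib sum_distrib_left algebra_simps)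
    also have "\<dots> \<le> 2 * (exp (growth_rate * T) * (initial_bound + flux_integral n)) + 2 * \<eta>\<^sup>2"
      using energy_le[OF t, of n] lift_l2_bound[OF t, of "Suc n"] by linarith
    finally show ?thesis unfolding sup_bound_def by (simp add: algebra_simps)
  qed
  then show ?thesis by (rule le_if_le_plus_null_sequence[OF flux_integral_tendsto_0])
qed

lemma Ds_partial_l2_le: "t \<in> {0..T} \<Longrightarrow> N \<le> n \<Longrightarrow>
  h * (\<Sum>k=1..N. (Dp h (s t) k)\<^sup>2) \<le> 2 * dissipation n t + 2 * lift_grad_bound"
proof -
  assume t: "t \<in> {0..T}" and n: "N \<le> n"
  have "h * (\<Sum>k=1..N. (Dp h (s t) k)\<^sup>2) = (1 / h) * (\<Sum>k=1..N. (s t (Suc k) - s t k)\<^sup>2)"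
    unfolding Dp_def using h by (simp add: power_divide sum_divide_distrib[symmetric] power2_eq_square)
  also have "\<dots> \<le> (1 / h) * (\<Sum>k=1..n. (s t (Suc k) - s t k)\<^sup>2)"
    using h n by (intro mult_left_mono sum_mono2) auto
  also have "\<dots> \<le> (1 / h) * (\<Sum>k=1..n. 2 * (dev t (Suc k) - dev t k)\<^sup>2 + 2 * (lift t (Suc k) - lift t k)\<^sup>2)"
  proof (intro mult_left_mono sum_mono)
    fix k
    have "s t (Suc k) - s t k = (dev t (Suc k) - dev t k) + (lift t (Suc k) - lift t k)"
      unfolding dev_def by simp
    then show "(s t (Suc k) - s t k)\<^sup>2 \<le> 2 * (dev t (Suc k) - dev t k)\<^sup>2 + 2 * (lift t (Suc k) - lift t k)\<^sup>2"
      by (simp only: square_add_le)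
  qed (use h in simp)
  also have "\<dots> = 2 * ((1 / h) * (\<Sum>k=1..n. (dev t (Suc k) - dev t k)\<^sup>2))
      + 2 * ((1 / h) * (\<Sum>k=1..n. (lift t (Suc k) - lift t k)\<^sup>2))"
    by (simp add: sum.distrib sum_distrib_left algebra_simps)
  also have "\<dots> \<le> 2 * dissipation n t + 2 * lift_grad n t"
    unfolding dissipation_def lift_grad_def using h by (intro add_mono mult_left_mono sum_mono2) auto
  also have "\<dots> \<le> 2 * dissipation n t + 2 * lift_grad_bound"
    using lift_grad_le[OF t] by simp
  finally show ?thesis .
qed

lemma Ds_partial_l2_integral_le: "integral {0..T} (\<lambda>t. h * (\<Sum>k=1..N. (Dp h (s t) k)\<^sup>2)) \<le> grad_bound"
proof -
  have "integral {0..T} (\<lambda>t. h * (\<Sum>k=1..N. (Dp h (s t) k)\<^sup>2))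
      \<le> grad_bound + 8 * exp (growth_rate * T) * flux_integral n" if n: "N \<le> n" for n
  proof -
    have "integral {0..T} (\<lambda>t. h * (\<Sum>k=1..N. (Dp h (s t) k)\<^sup>2))
        \<le> integral {0..T} (\<lambda>t. 2 * dissipation n t + 2 * lift_grad_bound)"
      using Ds_partial_l2_le[OF _ n] h unfolding Dp_def
      by (intro integral_le integrable_continuous_real continuous_intros s_cont dissipation_cont) auto
    also have "\<dots> = 2 * integral {0..T} (dissipation n) + 2 * lift_grad_bound * T"
      using T by (subst integral_add) (auto intro!: integrable_continuous_real continuous_intros dissipation_cont)
    also have "\<dots> \<le> grad_bound + 8 * exp (growth_rate * T) * flux_integral n"
      using dissipation_integral_le[of n] unfolding grad_bound_def by (simp add: algebra_simps)
    finally show ?thesis .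
  qed
  then show ?thesis by (rule le_if_le_plus_null_sequence[OF flux_integral_tendsto_0])
qed

lemma l2sq_s_le: "t \<in> {0..T} \<Longrightarrow> l2sq h (s t) \<le> ennreal sup_bound"
  unfolding l2sq_def
proof (rule suminf_ennreal_le)
  fix n assume "t \<in> {0..T}"
  have "(\<Sum>i<n. h * (s t (Suc i))\<^sup>2) = h * (\<Sum>k=1..n. (s t k)\<^sup>2)"
    by (induction n) (auto simp: sum.cl_ivl_Suc algebra_simps)
  with s_partial_l2_le[OF \<open>t \<in> {0..T}\<close>] show "(\<Sum>i<n. h * (s t (Suc i))\<^sup>2) \<le> sup_bound" by simp
qed (use h in simp)

lemma l2sq_Ds_integral_le: "(\<integral>\<^sup>+ t\<in>{0..T}. l2sq h (Dp h (s t)) \<partial>lborel) \<le> ennreal grad_bound"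
proof -
  have cont: "continuous_on {0..T} (\<lambda>t. h * (Dp h (s t) (Suc i))\<^sup>2)" for i
    unfolding Dp_def using h by (intro continuous_intros s_cont) auto
  have "(\<integral>\<^sup>+ t\<in>{0..T}. l2sq h (Dp h (s t)) \<partial>lborel)
      = (\<Sum>i. ennreal (integral {0..T} (\<lambda>t. h * (Dp h (s t) (Suc i))\<^sup>2)))"
    unfolding l2sq_def using h by (intro nn_integral_suminf_continuous cont) auto
  also have "\<dots> \<le> ennreal grad_bound"
  proof (rule suminf_ennreal_le)
    show "0 \<le> integral {0..T} (\<lambda>t. h * (Dp h (s t) (Suc i))\<^sup>2)" for i
      by (rule integral_nonneg[OF integrable_continuous_real[OF cont]]) (use h in simp)
    fix n
    have "(\<Sum>i<n. integral {0..T} (\<lambda>t. h * (Dp h (s t) (Suc i))\<^sup>2))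
        = integral {0..T} (\<lambda>t. \<Sum>i<n. h * (Dp h (s t) (Suc i))\<^sup>2)"
      by (rule integral_sum[symmetric]) (auto intro: integrable_continuous_real[OF cont])
    also have "\<dots> = integral {0..T} (\<lambda>t. h * (\<Sum>k=1..n. (Dp h (s t) k)\<^sup>2))"
      by (intro integral_cong, induction n) (auto simp: sum.cl_ivl_Suc algebra_simps)
    also have "\<dots> \<le> grad_bound" by (rule Ds_partial_l2_integral_le)
    finally show "(\<Sum>i<n. integral {0..T} (\<lambda>t. h * (Dp h (s t) (Suc i))\<^sup>2)) \<le> grad_bound" .
  qed
  finally show ?thesis .
qed

lemma main_bound:
  "(SUP t\<in>{0..T}. l2sq h (s t)) + (\<integral>\<^sup>+ t\<in>{0..T}. l2sq h (Dp h (s t)) \<partial>lborel)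
    \<le> ennreal (sup_bound + grad_bound)"
proof -
  have "0 \<le> sup_bound" "0 \<le> grad_bound"
    unfolding sup_bound_def grad_bound_def lift_grad_bound_def
    using initial_bound_nonneg T beta by auto
  moreover have "(SUP t\<in>{0..T}. l2sq h (s t)) \<le> ennreal sup_bound"
    by (rule SUP_least) (rule l2sq_s_le)
  ultimately show ?thesis
    using add_mono[OF _ l2sq_Ds_integral_le] by (simp add: ennreal_plus)
qed

end

theorem mainTheorem11:
  fixes \<eta> lam C0 cm \<phi>min \<phi>max B T \<beta> M\<psi> Ms0 Mc0 :: real
  assumes "B = -1 \<or> B = 1"
    and "lam > 0" and "T > 0" and "\<eta> > 0"
    and "1/4 < \<beta>" and "\<beta> < 1/2"
    and "0 < cm" and "cm \<le> C0"
    and "0 < \<phi>min"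
    and "\<forall>x\<in>{0..C0}. \<phi>min \<le> phi B x \<and> phi B x \<le> \<phi>max"
    and "B = 1 \<longrightarrow> \<eta> < 1"
  shows "\<exists>K>0. \<forall>h \<psi> s0 c0 s c.
     h > 0 \<and>
     holder_bdd \<beta> T \<psi> M\<psi> \<and> (\<forall>t\<in>{0..T}. 0 \<le> \<psi> t \<and> \<psi> t \<le> \<eta>) \<and> \<psi> 0 = 0 \<and>
     (\<forall>k. 0 \<le> s0 k \<and> s0 k \<le> \<eta>) \<and> s0 0 = 0 \<and>
     in_l2 s0 \<and> in_l2 (Dp h s0) \<and> l2sq_r h s0 \<le> Ms0\<^sup>2 \<and>
     (\<forall>k. cm \<le> c0 k \<and> c0 k \<le> C0) \<and>
     in_l2 (\<lambda>k. C0 - c0 k) \<and> in_l2 (Dp h c0) \<and> l2sq_r h (Dp h c0) \<le> Mc0\<^sup>2 \<and>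
     NS_solution h T lam B \<psi> s0 c0 s c
     \<longrightarrow> (SUP t\<in>{0..T}. l2sq h (s t))
         + (\<integral>\<^sup>+ t\<in>{0..T}. l2sq h (Dp h (s t)) \<partial>lborel) \<le> ennreal K"
proof -
  define K where "K = max 1 (NS_solution_estimate.sup_bound T \<eta> \<beta> M\<psi> lam C0 \<phi>min \<phi>max Ms0 Mc0
    + NS_solution_estimate.grad_bound T \<eta> \<beta> M\<psi> lam C0 \<phi>min \<phi>max Ms0 Mc0)"
  show ?thesis
  proof (rule exI[of _ K], intro conjI allI impI, goal_cases)
    case 1
    show ?case unfolding K_def by simp
  next
    case (2 h \<psi> s0 c0 s c)
    interpret NS_solution_estimate T \<eta> \<beta> M\<psi> \<psi> h lam C0 cm \<phi>min \<phi>max B Ms0 Mc0 s0 c0 s c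
      using assms 2 by unfold_locales auto
    from main_bound show ?case unfolding K_def by (rule order_trans) simp
  qed
qed

end
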